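(* Let $\Omega\subset\mathbb H^n$ be open, meeting $\{x^n=0\}$, $\Gamma=\Omega\cap\{x^n=0\}$, and let $H_1,H_2$ be smooth Riemannian metrics on $\Omega$ of the form $H_i=(dx^n)^2+h_i(x',x^n)$ with $H_1=H_2+\mathcal O((x^n)^\infty)$ on $\Gamma$. For $l=1,\dots,n+1$ let $f^l_1,f^l_2$ be functions on $\Omega$ with $L_{H_i}f^l_i=0$ in $\{x^n>0\}\cap\Omega$ and with $f^l_1=f^l_2$, $\partial_{x^n}f^l_1=\partial_{x^n}f^l_2$ on $\Gamma$ (these Cauchy data being $C^\infty$), and with $f^{n+1}_i$ nonvanishing. Set $Z^l_i=f^l_i/f^{n+1}_i$ for $l=1,\dots,n$, and $Z_i=(Z^1_i,\dots,Z^n_i)$. Then $Z_1=Z_2+\mathcal O((x^n)^\infty)$ on $\Gamma$. In particular, if the $Z_i$ are coordinate systems and $J_x(H_1)=J_x(H_2)$ for $x\in\Gamma$, then $J_x((Z_1^{-1})^*H_1)=J_x((Z_2^{-1})^*H_2)$ at the corresponding boundary points $x=Z_1(x)=Z_2(x)$.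
   Context: $\mathbb H^n=\{(x',x^n):x^n\ge0\}$; $L_H$ is the conformal Laplacian $-\Delta_H+\frac{n-2}{4(n-1)}S_H$. "$A=B+\mathcal O((x^n)^\infty)$ on $\Gamma$" means all $x^n$-derivatives of $A-B$ vanish on $\Gamma$. $J_x(S)$, the jet of a tensor field $S$ at $x$, is the collection of Taylor coefficients at $x$ of its coordinate representation. *)

theory Defs
  imports "HOL-Analysis.Analysis"
begin

text \<open>Points of R^n are vectors real^'n (n = CARD('n)). One index N :: 'n plays the
role of the normal coordinate x^n.\<close>

definition halfspace :: "'n \<Rightarrow> (real^'n) set" where
  "halfspace N = {x. x $ N \<ge> 0}"

definition pd :: "'n \<Rightarrow> (real^'n \<Rightarrow> real) \<Rightarrow> real^'n \<Rightarrow> real" where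
  "pd i f x = vector_derivative (\<lambda>t. f (x + t *\<^sub>R axis i 1)) (at 0)"

fun ipd :: "'n list \<Rightarrow> (real^'n \<Rightarrow> real) \<Rightarrow> real^'n \<Rightarrow> real" where
  "ipd [] f = f"
| "ipd (i # is) f = pd i (ipd is f)"

text \<open>Taylor coefficient (derivative d_is f) of f at a point x of S, obtained as the
limit of the derivative from the interior of S (this is the value at x of the continuous
extension of the derivative; it coincides with the usual derivative at interior points).\<close>
definition jc :: "(real^'n) set \<Rightarrow> 'n list \<Rightarrow> (real^'n \<Rightarrow> real) \<Rightarrow> real^'n \<Rightarrow> real" where
  "jc S is f x = Lim (at x within interior S) (ipd is f)"

definition smooth_upto :: "(real^'n) set \<Rightarrow> (real^'n \<Rightarrow> real) \<Rightarrow> bool" where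
  "smooth_upto S f \<longleftrightarrow>
     S \<subseteq> closure (interior S) \<and>
     (\<forall>is i. \<forall>x\<in>interior S. (\<lambda>t. ipd is f (x + t *\<^sub>R axis i 1)) differentiable (at 0)) \<and>
     (\<forall>is. continuous_on (interior S) (ipd is f)) \<and>
     (\<forall>is. \<forall>x\<in>S. \<exists>L. (ipd is f \<longlongrightarrow> L) (at x within interior S)) \<and>
     (\<forall>x\<in>S. (f \<longlongrightarrow> f x) (at x within interior S))"

definition riem_metric :: "(real^'n) set \<Rightarrow> (real^'n \<Rightarrow> real^'n^'n) \<Rightarrow> bool" where
  "riem_metric S H \<longleftrightarrow>
     (\<forall>i j. smooth_upto S (\<lambda>x. H x $ i $ j)) \<and>
     (\<forall>x\<in>S. transpose (H x) = H x \<and> (\<forall>v. v \<noteq> 0 \<longrightarrow> v \<bullet> (H x *v v) > 0))"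

text \<open>H = (dx^N)^2 + h(x', x^N), h without dx^N components.\<close>
definition normal_form :: "'n \<Rightarrow> (real^'n) set \<Rightarrow> (real^'n \<Rightarrow> real^'n^'n) \<Rightarrow> bool" where
  "normal_form N S H \<longleftrightarrow>
     (\<forall>x\<in>S. H x $ N $ N = 1 \<and> (\<forall>i. i \<noteq> N \<longrightarrow> H x $ N $ i = 0 \<and> H x $ i $ N = 0))"

definition ginv :: "(real^'n \<Rightarrow> real^'n^'n) \<Rightarrow> real^'n \<Rightarrow> real^'n^'n" where
  "ginv H x = matrix_inv (H x)"

definition chr :: "(real^'n \<Rightarrow> real^'n^'n) \<Rightarrow> 'n \<Rightarrow> 'n \<Rightarrow> 'n \<Rightarrow> real^'n \<Rightarrow> real" where
  "chr H k i j x = (1/2) * (\<Sum>l\<in>UNIV. ginv H x $ k $ l *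
      (pd i (\<lambda>y. H y $ j $ l) x + pd j (\<lambda>y. H y $ i $ l) x - pd l (\<lambda>y. H y $ i $ j) x))"

definition ricci :: "(real^'n \<Rightarrow> real^'n^'n) \<Rightarrow> 'n \<Rightarrow> 'n \<Rightarrow> real^'n \<Rightarrow> real" where
  "ricci H i j x = (\<Sum>k\<in>UNIV. pd k (chr H k i j) x - pd j (chr H k i k) x
      + (\<Sum>l\<in>UNIV. chr H k k l x * chr H l i j x - chr H k j l x * chr H l i k x))"

definition scal :: "(real^'n \<Rightarrow> real^'n^'n) \<Rightarrow> real^'n \<Rightarrow> real" where
  "scal H x = (\<Sum>i\<in>UNIV. \<Sum>j\<in>UNIV. ginv H x $ i $ j * ricci H i j x)"

definition lap :: "(real^'n \<Rightarrow> real^'n^'n) \<Rightarrow> (real^'n \<Rightarrow> real) \<Rightarrow> real^'n \<Rightarrow> real" where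
  "lap H f x = (\<Sum>i\<in>UNIV. \<Sum>j\<in>UNIV. ginv H x $ i $ j *
      (pd i (pd j f) x - (\<Sum>k\<in>UNIV. chr H k i j x * pd k f x)))"

definition conf_lap :: "(real^'n \<Rightarrow> real^'n^'n) \<Rightarrow> (real^'n \<Rightarrow> real) \<Rightarrow> real^'n \<Rightarrow> real" where
  "conf_lap H f x = - lap H f x
      + (real CARD('n) - 2) / (4 * (real CARD('n) - 1)) * scal H x * f x"

text \<open>A = O((x^N)^infinity) on the boundary part of S: all x^N-derivatives of A vanish there.\<close>
definition flat_bdry :: "'n \<Rightarrow> (real^'n) set \<Rightarrow> (real^'n \<Rightarrow> real) \<Rightarrow> bool" where
  "flat_bdry N S A \<longleftrightarrow> (\<forall>k. \<forall>x\<in>S. x $ N = 0 \<longrightarrow> jc S (replicate k N) A x = 0)"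

definition coord_system :: "(real^'n) set \<Rightarrow> (real^'n \<Rightarrow> real^'n) \<Rightarrow> bool" where
  "coord_system S Z \<longleftrightarrow> inj_on Z S \<and> (\<forall>l. smooth_upto S (\<lambda>x. Z x $ l)) \<and>
     (\<forall>l. smooth_upto (Z ` S) (\<lambda>y. inv_into S Z y $ l))"

text \<open>Pushforward metric (Z^{-1})^* H on Z ` S, in the coordinates y = Z x.\<close>
definition push_metric :: "(real^'n) set \<Rightarrow> (real^'n \<Rightarrow> real^'n) \<Rightarrow> (real^'n \<Rightarrow> real^'n^'n)
    \<Rightarrow> real^'n \<Rightarrow> real^'n^'n" where
  "push_metric S Z H y = (\<chi> a b. \<Sum>i\<in>UNIV. \<Sum>j\<in>UNIV.
      pd a (\<lambda>y. inv_into S Z y $ i) y * pd b (\<lambda>y. inv_into S Z y $ j) y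
      * H (inv_into S Z y) $ i $ j)"

end

theory Submission
  imports Defs
begin

text \<open>Solving \<open>L\<^sub>H f = 0\<close> for \<open>\<partial>\<^sub>n\<partial>\<^sub>n f\<close> expresses every derivative with \<open>m + 2\<close> normal
  derivatives through derivatives with at most \<open>m + 1\<close> of them, with coefficients (\<open>g\<^sup>i\<^sup>j\<close>, Christoffel
  symbols, scalar curvature) built algebraically from the jets of \<open>H\<close>; and tangential derivatives of a
  function vanishing on \<open>\<Gamma>\<close> vanish there. Hence, by induction on the number of normal derivatives, solutions
  with the same Cauchy data for metrics agreeing to infinite order have the same jets on \<open>\<Gamma>\<close>, and so do
  the quotients \<open>Z\<^sub>i\<close>, since agreement of jets is preserved by sums, products and quotients.
  When the \<open>Z\<^sub>i\<close> are charts, the chain rule writes every jet of the push-forward metric at \<open>Z\<^sub>i(x)\<close>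
  as a polynomial in jets of \<open>H\<^sub>i\<close>, of \<open>Z\<^sub>i\<close> and of the inverse Jacobian of \<open>Z\<^sub>i\<close> (Cramer's rule),
  all of which agree at boundary points.\<close>

lemma ipd_append: "ipd (is @ js) f = ipd is (ipd js f)"
  by (induction "is") auto

lemma ipd_snoc: "ipd (is @ [i]) f = ipd is (pd i f)"
  by (simp add: ipd_append)

definition partial_differentiable :: "(real^'n \<Rightarrow> real) \<Rightarrow> real^'n \<Rightarrow> 'n \<Rightarrow> bool" where
  "partial_differentiable f x i \<longleftrightarrow> (\<lambda>t. f (x + t *\<^sub>R axis i 1)) differentiable (at 0)"

lemma pd_has_vector_derivative:
  "partial_differentiable f x i \<Longrightarrow> ((\<lambda>t. f (x + t *\<^sub>R axis i 1)) has_vector_derivative pd i f x) (at 0)"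
  unfolding partial_differentiable_def pd_def using vector_derivative_works by blast

lemma pd_has_real_derivative:
  "partial_differentiable f x i \<Longrightarrow> ((\<lambda>t. f (x + t *\<^sub>R axis i 1)) has_real_derivative pd i f x) (at 0)"
  using pd_has_vector_derivative has_real_derivative_iff_has_vector_derivative by blast

lemma pd_eqI:
  "((\<lambda>t. f (x + t *\<^sub>R axis i 1)) has_vector_derivative D) (at 0) \<Longrightarrow> pd i f x = D"
  unfolding pd_def by (rule vector_derivative_at)

lemma partial_differentiableI:
  "((\<lambda>t. f (x + t *\<^sub>R axis i 1)) has_vector_derivative D) (at 0) \<Longrightarrow> partial_differentiable f x i"
  unfolding partial_differentiable_def using differentiableI_vector by blast

lemma line_has_real_derivative:
  assumes "partial_differentiable f (q + s0 *\<^sub>R axis i 1) i"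
  shows "((\<lambda>s. f (q + s *\<^sub>R axis i 1)) has_real_derivative pd i f (q + s0 *\<^sub>R axis i 1)) (at s0)"
proof -
  let ?p = "q + s0 *\<^sub>R axis i 1"
  have "(\<lambda>t. f (?p + t *\<^sub>R axis i 1)) = (\<lambda>t. (\<lambda>s. f (q + s *\<^sub>R axis i 1)) (t + s0))"
    by (rule ext) (simp add: algebra_simps scaleR_add_left)
  then have "((\<lambda>t. (\<lambda>s. f (q + s *\<^sub>R axis i 1)) (t + s0)) has_real_derivative pd i f ?p) (at 0)"
    using pd_has_real_derivative[OF assms] by simp
  then show ?thesis using DERIV_shift[of "\<lambda>s. f (q + s *\<^sub>R axis i 1)" "pd i f ?p" 0 s0] by simp
qed

lemma eventually_line_in_open:
  fixes x :: "real^'n"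
  assumes "open U" "x \<in> U"
  shows "eventually (\<lambda>t. x + t *\<^sub>R v \<in> U) (nhds (0::real))"
proof -
  have "open {t::real. x + t *\<^sub>R v \<in> U}"
    using continuous_open_vimage[OF assms(1), of "\<lambda>t::real. x + t *\<^sub>R v"]
    by (simp add: vimage_def continuous_intros)
  moreover have "0 \<in> {t::real. x + t *\<^sub>R v \<in> U}" using assms by simp
  ultimately show ?thesis unfolding eventually_nhds by blast
qed

lemma
  assumes "open U" "x \<in> U" "\<And>y. y \<in> U \<Longrightarrow> f y = g y"
  shows pd_cong: "pd i f x = pd i g x"
    and partial_differentiable_cong: "partial_differentiable f x i \<Longrightarrow> partial_differentiable g x i"
proof -
  have ev: "eventually (\<lambda>t. t \<in> UNIV \<longrightarrow> f (x + t *\<^sub>R axis i 1) = g (x + t *\<^sub>R axis i 1)) (nhds 0)"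
    using eventually_line_in_open[OF assms(1,2), of "axis i 1"] by eventually_elim (use assms(3) in auto)
  then show "pd i f x = pd i g x" unfolding pd_def by (intro vector_derivative_cong_eq) auto
  have e0: "f (x + 0 *\<^sub>R axis i 1) = g (x + 0 *\<^sub>R axis i 1)" using assms(2,3) by simp
  assume "partial_differentiable f x i"
  then have "((\<lambda>t. g (x + t *\<^sub>R axis i 1)) has_vector_derivative pd i f x) (at 0)"
    using has_vector_derivative_cong_ev[OF ev e0] pd_has_vector_derivative by blast
  then show "partial_differentiable g x i" by (rule partial_differentiableI)
qed

lemma ipd_cong:
  assumes "open U" "\<And>y. y \<in> U \<Longrightarrow> f y = g y" "x \<in> U"
  shows "ipd is f x = ipd is g x"
  using assms(3)
proof (induction "is" arbitrary: x)
  case (Cons i "is")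
  have "pd i (ipd is f) x = pd i (ipd is g) x"
    by (rule pd_cong[OF assms(1) Cons.prems]) (rule Cons.IH)
  then show ?case by simp
qed (use assms in simp)

lemma
  assumes "partial_differentiable f x i" "partial_differentiable g x i"
  shows partial_differentiable_add: "partial_differentiable (\<lambda>y. f y + g y) x i"
    and pd_add: "pd i (\<lambda>y. f y + g y) x = pd i f x + pd i g x"
    and partial_differentiable_diff: "partial_differentiable (\<lambda>y. f y - g y) x i"
    and pd_diff: "pd i (\<lambda>y. f y - g y) x = pd i f x - pd i g x"
    and partial_differentiable_mult: "partial_differentiable (\<lambda>y. f y * g y) x i"
    and pd_mult: "pd i (\<lambda>y. f y * g y) x = pd i f x * g x + f x * pd i g x"
proof -
  note df = pd_has_vector_derivative[OF assms(1)] and dg = pd_has_vector_derivative[OF assms(2)]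
  have add: "((\<lambda>t. f (x + t *\<^sub>R axis i 1) + g (x + t *\<^sub>R axis i 1)) has_vector_derivative pd i f x + pd i g x) (at 0)"
    by (intro has_vector_derivative_add df dg)
  have diff: "((\<lambda>t. f (x + t *\<^sub>R axis i 1) - g (x + t *\<^sub>R axis i 1)) has_vector_derivative pd i f x - pd i g x) (at 0)"
    by (intro has_vector_derivative_diff df dg)
  have "((\<lambda>t. f (x + t *\<^sub>R axis i 1) * g (x + t *\<^sub>R axis i 1)) has_vector_derivative
       f (x + 0 *\<^sub>R axis i 1) * pd i g x + pd i f x * g (x + 0 *\<^sub>R axis i 1)) (at 0)"
    by (intro has_vector_derivative_mult df dg)
  then have mult: "((\<lambda>t. f (x + t *\<^sub>R axis i 1) * g (x + t *\<^sub>R axis i 1)) has_vector_derivative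
       pd i f x * g x + f x * pd i g x) (at 0)" by (simp add: algebra_simps)
  show "partial_differentiable (\<lambda>y. f y + g y) x i" by (rule partial_differentiableI[OF add])
  show "pd i (\<lambda>y. f y + g y) x = pd i f x + pd i g x" by (rule pd_eqI[OF add])
  show "partial_differentiable (\<lambda>y. f y - g y) x i" by (rule partial_differentiableI[OF diff])
  show "pd i (\<lambda>y. f y - g y) x = pd i f x - pd i g x" by (rule pd_eqI[OF diff])
  show "partial_differentiable (\<lambda>y. f y * g y) x i" by (rule partial_differentiableI[OF mult])
  show "pd i (\<lambda>y. f y * g y) x = pd i f x * g x + f x * pd i g x" by (rule pd_eqI[OF mult])
qed

lemma
  assumes "partial_differentiable h x i" "partial_differentiable g x i" "g x \<noteq> 0"
  shows partial_differentiable_quot: "partial_differentiable (\<lambda>y. h y / g y ^ k) x i"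
    and pd_quot: "pd i (\<lambda>y. h y / g y ^ k) x = pd i h x / g x ^ k - real k * h x * pd i g x / g x ^ Suc k"
proof -
  have dg: "((\<lambda>t. g (x + t *\<^sub>R axis i 1)) has_real_derivative pd i g x) (at 0)"
    by (rule pd_has_real_derivative[OF assms(2)])
  have dgk: "((\<lambda>t. g (x + t *\<^sub>R axis i 1) ^ k) has_real_derivative real k * g x ^ (k - 1) * pd i g x) (at 0)"
    using DERIV_power[OF dg, of k] by (simp add: mult_ac)
  have d: "((\<lambda>t. h (x + t *\<^sub>R axis i 1) / g (x + t *\<^sub>R axis i 1) ^ k) has_real_derivative
     (pd i h x * g x ^ k - h x * (real k * g x ^ (k - 1) * pd i g x)) / (g x ^ k * g x ^ k)) (at 0)"
    using DERIV_divide[OF pd_has_real_derivative[OF assms(1)] dgk] assms(3) by simp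
  have "(pd i h x * g x ^ k - h x * (real k * g x ^ (k - 1) * pd i g x)) / (g x ^ k * g x ^ k)
      = pd i h x / g x ^ k - real k * h x * pd i g x / g x ^ Suc k"
  proof (cases k)
    case (Suc j)
    then show ?thesis using assms(3) by (simp add: field_simps power_add[symmetric])
  qed simp
  then have q: "((\<lambda>t. h (x + t *\<^sub>R axis i 1) / g (x + t *\<^sub>R axis i 1) ^ k) has_vector_derivative
     pd i h x / g x ^ k - real k * h x * pd i g x / g x ^ Suc k) (at 0)"
    using d by (simp add: has_real_derivative_iff_has_vector_derivative)
  show "partial_differentiable (\<lambda>y. h y / g y ^ k) x i" by (rule partial_differentiableI[OF q])
  show "pd i (\<lambda>y. h y / g y ^ k) x = pd i h x / g x ^ k - real k * h x * pd i g x / g x ^ Suc k"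
    by (rule pd_eqI[OF q])
qed

lemma
  shows partial_differentiable_const: "partial_differentiable (\<lambda>y. c) x i"
    and pd_const: "pd i (\<lambda>y. c) x = 0"
  by (auto intro: partial_differentiableI pd_eqI has_vector_derivative_const)

lemma ipd_Cons_const: "ipd (i # is) (\<lambda>y. c) = (\<lambda>y. 0)"
proof (induction "is" arbitrary: i)
  case (Cons j "is")
  have "ipd (i # j # is) (\<lambda>y. c) = pd i (ipd (j # is) (\<lambda>y. c))" by (simp only: ipd.simps)
  also have "\<dots> = pd i (\<lambda>y. 0)" by (simp only: Cons.IH)
  finally show ?case by (simp add: pd_const fun_eq_iff)
qed (simp add: pd_const fun_eq_iff)

lemma ipd_const: "ipd is (\<lambda>y. c) = (if is = [] then (\<lambda>y. c) else (\<lambda>y. 0))"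
  by (cases "is") (simp_all only: ipd_Cons_const ipd.simps, simp_all)

definition boundary_regular :: "(real^'n) set \<Rightarrow> (real^'n \<Rightarrow> real) \<Rightarrow> bool" where
  "boundary_regular S f \<longleftrightarrow> (\<forall>i. \<forall>x\<in>interior S. partial_differentiable f x i) \<and>
     continuous_on (interior S) f \<and> (\<forall>x\<in>S. \<exists>L. (f \<longlongrightarrow> L) (at x within interior S))"

definition smooth_ext :: "(real^'n) set \<Rightarrow> (real^'n \<Rightarrow> real) \<Rightarrow> bool" where
  "smooth_ext S f \<longleftrightarrow> (\<forall>is. boundary_regular S (ipd is f))"

definition nonvanishing_ext :: "(real^'n) set \<Rightarrow> (real^'n \<Rightarrow> real) \<Rightarrow> bool" where
  "nonvanishing_ext S g \<longleftrightarrow> (\<forall>x\<in>interior S. g x \<noteq> 0) \<and>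
     (\<forall>x\<in>S. \<exists>L. (g \<longlongrightarrow> L) (at x within interior S) \<and> L \<noteq> 0)"

lemma smooth_upto_iff:
  "smooth_upto S f \<longleftrightarrow> S \<subseteq> closure (interior S) \<and> smooth_ext S f \<and> (\<forall>x\<in>S. (f \<longlongrightarrow> f x) (at x within interior S))"
  unfolding smooth_upto_def smooth_ext_def boundary_regular_def partial_differentiable_def by blast

lemma smooth_upto_tendsto: "smooth_upto S f \<Longrightarrow> x \<in> S \<Longrightarrow> (f \<longlongrightarrow> f x) (at x within interior S)"
  unfolding smooth_upto_iff by blast

lemma smooth_upto_smooth_ext: "smooth_upto S f \<Longrightarrow> smooth_ext S f"
  unfolding smooth_upto_iff by blast

lemma smooth_upto_closure_interior: "smooth_upto S f \<Longrightarrow> S \<subseteq> closure (interior S)"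
  unfolding smooth_upto_iff by blast

lemma nonvanishing_ext_smooth_upto: "smooth_upto S g \<Longrightarrow> (\<forall>x\<in>S. g x \<noteq> 0) \<Longrightarrow> nonvanishing_ext S g"
  unfolding nonvanishing_ext_def smooth_upto_iff using interior_subset by blast

lemma boundary_regularD:
  assumes "boundary_regular S f"
  shows "\<And>x i. x \<in> interior S \<Longrightarrow> partial_differentiable f x i" "continuous_on (interior S) f"
    "\<And>x. x \<in> S \<Longrightarrow> \<exists>L. (f \<longlongrightarrow> L) (at x within interior S)"
  using assms unfolding boundary_regular_def by simp_all

lemma boundary_regularI:
  assumes "\<And>x i. x \<in> interior S \<Longrightarrow> partial_differentiable f x i" "continuous_on (interior S) f"
    "\<And>x. x \<in> S \<Longrightarrow> \<exists>L. (f \<longlongrightarrow> L) (at x within interior S)"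
  shows "boundary_regular S f"
  using assms unfolding boundary_regular_def by simp

lemma boundary_regular_cong:
  assumes eq: "\<And>y. y \<in> interior S \<Longrightarrow> f y = g y" and f: "boundary_regular S f"
  shows "boundary_regular S g"
proof (rule boundary_regularI)
  show "partial_differentiable g x i" if "x \<in> interior S" for x i
    using partial_differentiable_cong[OF open_interior that, of f g] eq boundary_regularD(1)[OF f that]
    by blast
  have "continuous_on (interior S) f = continuous_on (interior S) g"
    by (rule continuous_on_cong) (auto simp: eq)
  then show "continuous_on (interior S) g" using boundary_regularD(2)[OF f] by simp
  show "\<exists>L. (g \<longlongrightarrow> L) (at x within interior S)" if x: "x \<in> S" for x
  proof -
    obtain L where L: "(f \<longlongrightarrow> L) (at x within interior S)" using boundary_regularD(3)[OF f x] by blast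
    have "(f \<longlongrightarrow> L) (at x within interior S) = (g \<longlongrightarrow> L) (at x within interior S)"
      by (rule Lim_cong_within) (auto simp: eq)
    then show ?thesis using L by blast
  qed
qed

lemma
  assumes f: "boundary_regular S f" and g: "boundary_regular S g"
  shows boundary_regular_add: "boundary_regular S (\<lambda>y. f y + g y)"
    and boundary_regular_diff: "boundary_regular S (\<lambda>y. f y - g y)"
    and boundary_regular_mult: "boundary_regular S (\<lambda>y. f y * g y)"
proof -
  note df = boundary_regularD(1)[OF f] and dg = boundary_regularD(1)[OF g]
  have cont: "continuous_on (interior S) f" "continuous_on (interior S) g"
    using boundary_regularD(2) f g by blast+
  have lim: "\<exists>L1 L2. (f \<longlongrightarrow> L1) (at x within interior S) \<and> (g \<longlongrightarrow> L2) (at x within interior S)"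
    if "x \<in> S" for x
    using boundary_regularD(3)[OF f that] boundary_regularD(3)[OF g that] by blast
  show "boundary_regular S (\<lambda>y. f y + g y)"
    using df dg cont lim
    by (intro boundary_regularI) (blast intro: partial_differentiable_add continuous_on_add tendsto_add)+
  show "boundary_regular S (\<lambda>y. f y - g y)"
    using df dg cont lim
    by (intro boundary_regularI) (blast intro: partial_differentiable_diff continuous_on_diff tendsto_diff)+
  show "boundary_regular S (\<lambda>y. f y * g y)"
    using df dg cont lim
    by (intro boundary_regularI) (blast intro: partial_differentiable_mult continuous_on_mult tendsto_mult)+
qed

lemma boundary_regular_quot:
  assumes h: "boundary_regular S h" and g: "boundary_regular S g" and nz: "nonvanishing_ext S g"
  shows "boundary_regular S (\<lambda>y. h y / g y ^ k)"
proof (rule boundary_regularI)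
  have g0: "\<And>x. x \<in> interior S \<Longrightarrow> g x \<noteq> 0" using nz unfolding nonvanishing_ext_def by blast
  show "partial_differentiable (\<lambda>y. h y / g y ^ k) x i" if "x \<in> interior S" for x i
    using partial_differentiable_quot boundary_regularD(1)[OF h that] boundary_regularD(1)[OF g that] g0 that
    by blast
  show "continuous_on (interior S) (\<lambda>y. h y / g y ^ k)"
    using boundary_regularD(2)[OF h] boundary_regularD(2)[OF g] g0 by (intro continuous_intros) auto
  show "\<exists>L. ((\<lambda>y. h y / g y ^ k) \<longlongrightarrow> L) (at x within interior S)" if x: "x \<in> S" for x
  proof -
    obtain L1 where "(h \<longlongrightarrow> L1) (at x within interior S)" using boundary_regularD(3)[OF h x] by blast
    moreover obtain L2 where "(g \<longlongrightarrow> L2) (at x within interior S)" "L2 \<noteq> 0"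
      using nz x unfolding nonvanishing_ext_def by blast
    ultimately have "((\<lambda>y. h y / g y ^ k) \<longlongrightarrow> L1 / L2 ^ k) (at x within interior S)"
      by (intro tendsto_divide tendsto_power) auto
    then show ?thesis by blast
  qed
qed

lemma boundary_regular_const: "boundary_regular S (\<lambda>y. c)"
  by (rule boundary_regularI) (auto intro!: continuous_intros partial_differentiable_const)

lemma smooth_ext_ipd: "smooth_ext S f \<Longrightarrow> smooth_ext S (ipd js f)"
  unfolding smooth_ext_def by (metis ipd_append)

lemma smooth_ext_pd: "smooth_ext S f \<Longrightarrow> smooth_ext S (pd i f)"
  using smooth_ext_ipd[of S f "[i]"] by simp

lemma smooth_ext_boundary_regular: "smooth_ext S f \<Longrightarrow> boundary_regular S (ipd js f)"
  unfolding smooth_ext_def by blast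

lemma smooth_ext_partial_differentiable:
  "smooth_ext S f \<Longrightarrow> x \<in> interior S \<Longrightarrow> partial_differentiable (ipd js f) x i"
  using boundary_regularD(1)[OF smooth_ext_boundary_regular] by blast

lemma smooth_ext_continuous_on: "smooth_ext S f \<Longrightarrow> continuous_on (interior S) (ipd js f)"
  using boundary_regularD(2)[OF smooth_ext_boundary_regular] by blast

lemma smooth_ext_cong:
  assumes "\<And>y. y \<in> interior S \<Longrightarrow> f y = g y" "smooth_ext S f"
  shows "smooth_ext S g"
  unfolding smooth_ext_def
proof
  fix "is"
  have "\<And>y. y \<in> interior S \<Longrightarrow> ipd is f y = ipd is g y"
    by (rule ipd_cong[OF open_interior]) (use assms(1) in auto)
  then show "boundary_regular S (ipd is g)"
    using boundary_regular_cong smooth_ext_boundary_regular[OF assms(2)] by blast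
qed

lemma smooth_ext_const: "smooth_ext S (\<lambda>y. c)"
  unfolding smooth_ext_def by (auto simp: ipd_const boundary_regular_const)

text \<open>Linearity of iterated derivatives only needs the regularity of the lower-order
  derivatives; this is what makes the inductive proofs of closure under products and quotients work.\<close>

lemma ipd_add_interior:
  assumes "\<forall>js. length js < length is \<longrightarrow> boundary_regular S (ipd js f) \<and> boundary_regular S (ipd js g)"
    and "x \<in> interior S"
  shows "ipd is (\<lambda>y. f y + g y) x = ipd is f x + ipd is g x"
  using assms
proof (induction "is" arbitrary: x)
  case (Cons i "is")
  have "pd i (ipd is (\<lambda>y. f y + g y)) x = pd i (\<lambda>y. ipd is f y + ipd is g y) x"
    by (rule pd_cong[OF open_interior Cons.prems(2)]) (use Cons.IH Cons.prems(1) in force)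
  also have "\<dots> = pd i (ipd is f) x + pd i (ipd is g) x"
    using Cons.prems unfolding boundary_regular_def by (intro pd_add) auto
  finally show ?case by simp
qed simp

lemma ipd_diff_interior:
  assumes "\<forall>js. length js < length is \<longrightarrow> boundary_regular S (ipd js f) \<and> boundary_regular S (ipd js g)"
    and "x \<in> interior S"
  shows "ipd is (\<lambda>y. f y - g y) x = ipd is f x - ipd is g x"
  using assms
proof (induction "is" arbitrary: x)
  case (Cons i "is")
  have "pd i (ipd is (\<lambda>y. f y - g y)) x = pd i (\<lambda>y. ipd is f y - ipd is g y) x"
    by (rule pd_cong[OF open_interior Cons.prems(2)]) (use Cons.IH Cons.prems(1) in force)
  also have "\<dots> = pd i (ipd is f) x - pd i (ipd is g) x"
    using Cons.prems unfolding boundary_regular_def by (intro pd_diff) auto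
  finally show ?case by simp
qed simp

lemma
  assumes "smooth_ext S f" "smooth_ext S g" "x \<in> interior S"
  shows ipd_add: "ipd is (\<lambda>y. f y + g y) x = ipd is f x + ipd is g x"
    and ipd_diff: "ipd is (\<lambda>y. f y - g y) x = ipd is f x - ipd is g x"
  using assms by (auto intro!: ipd_add_interior ipd_diff_interior smooth_ext_boundary_regular)

lemma
  assumes f: "smooth_ext S f" and g: "smooth_ext S g"
  shows smooth_ext_add: "smooth_ext S (\<lambda>y. f y + g y)"
    and smooth_ext_diff: "smooth_ext S (\<lambda>y. f y - g y)"
  unfolding smooth_ext_def
proof (rule_tac[!] allI)
  fix "is"
  show "boundary_regular S (ipd is (\<lambda>y. f y + g y))"
    by (rule boundary_regular_cong[OF _ boundary_regular_add])
       (use ipd_add[OF f g] f g in \<open>auto intro: smooth_ext_boundary_regular\<close>)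
  show "boundary_regular S (ipd is (\<lambda>y. f y - g y))"
    by (rule boundary_regular_cong[OF _ boundary_regular_diff])
       (use ipd_diff[OF f g] f g in \<open>auto intro: smooth_ext_boundary_regular\<close>)
qed

lemma smooth_ext_sum:
  "finite A \<Longrightarrow> (\<And>a. a \<in> A \<Longrightarrow> smooth_ext S (f a)) \<Longrightarrow> smooth_ext S (\<lambda>y. \<Sum>a\<in>A. f a y)"
  by (induction A rule: finite_induct) (auto intro: smooth_ext_add smooth_ext_const)

lemma boundary_regular_ipd_mult:
  assumes "smooth_ext S f" "smooth_ext S g"
  shows "boundary_regular S (ipd is (\<lambda>y. f y * g y))"
  using assms
proof (induction "length is" arbitrary: "is" f g rule: less_induct)
  case less
  note f = less.prems(1) and g = less.prems(2)
  show ?case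
  proof (cases "is" rule: rev_cases)
    case Nil
    then show ?thesis
      using boundary_regular_mult smooth_ext_boundary_regular[OF f, of "[]"]
        smooth_ext_boundary_regular[OF g, of "[]"] by simp
  next
    case (snoc js i)
    have IH: "boundary_regular S (ipd ks (\<lambda>y. u y * v y))"
      if "length ks \<le> length js" "smooth_ext S u" "smooth_ext S v" for ks u v
      using less.hyps[of ks u v] that snoc by simp
    have "ipd (js @ [i]) (\<lambda>y. f y * g y) x
        = ipd js (\<lambda>y. pd i f y * g y + f y * pd i g y) x" if x: "x \<in> interior S" for x
      unfolding ipd_snoc
      by (rule ipd_cong[OF open_interior _ x], rule pd_mult)
         (use f g in \<open>auto intro: smooth_ext_partial_differentiable[where js="[]", simplified]\<close>)
    also have "\<dots> x = ipd js (\<lambda>y. pd i f y * g y) x + ipd js (\<lambda>y. f y * pd i g y) x"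
      if "x \<in> interior S" for x
      by (rule ipd_add_interior[OF _ that]) (blast intro: IH smooth_ext_pd f g less_imp_le)
    finally have "\<And>x. x \<in> interior S \<Longrightarrow>
        ipd js (\<lambda>y. pd i f y * g y) x + ipd js (\<lambda>y. f y * pd i g y) x = ipd is (\<lambda>y. f y * g y) x"
      using snoc by simp
    moreover have "boundary_regular S (\<lambda>x. ipd js (\<lambda>y. pd i f y * g y) x + ipd js (\<lambda>y. f y * pd i g y) x)"
      by (intro boundary_regular_add IH smooth_ext_pd f g order_refl)
    ultimately show ?thesis by (rule boundary_regular_cong)
  qed
qed

lemma smooth_ext_mult: "smooth_ext S f \<Longrightarrow> smooth_ext S g \<Longrightarrow> smooth_ext S (\<lambda>y. f y * g y)"
  unfolding smooth_ext_def[of S "\<lambda>y. f y * g y"] by (blast intro: boundary_regular_ipd_mult)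

lemma smooth_ext_prod:
  "finite A \<Longrightarrow> (\<And>a. a \<in> A \<Longrightarrow> smooth_ext S (f a)) \<Longrightarrow> smooth_ext S (\<lambda>y. \<Prod>a\<in>A. f a y)"
  by (induction A rule: finite_induct) (auto intro: smooth_ext_mult smooth_ext_const)

lemma boundary_regular_ipd_quot:
  assumes g: "smooth_ext S g" "nonvanishing_ext S g" and h: "smooth_ext S h"
  shows "boundary_regular S (ipd is (\<lambda>y. h y / g y ^ k))"
  using h
proof (induction "length is" arbitrary: "is" h k rule: less_induct)
  case less
  note h = less.prems
  show ?case
  proof (cases "is" rule: rev_cases)
    case Nil
    then show ?thesis
      using boundary_regular_quot smooth_ext_boundary_regular[OF h, of "[]"]
        smooth_ext_boundary_regular[OF g(1), of "[]"] g(2) by simp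
  next
    case (snoc js i)
    have IH: "boundary_regular S (ipd ks (\<lambda>y. u y / g y ^ m))"
      if "length ks \<le> length js" "smooth_ext S u" for ks u m
      using less.hyps[of ks u m] that snoc by simp
    have dk: "smooth_ext S (\<lambda>y. real k * h y * pd i g y)"
      by (intro smooth_ext_mult smooth_ext_const h smooth_ext_pd g(1))
    have "ipd (js @ [i]) (\<lambda>y. h y / g y ^ k) x
        = ipd js (\<lambda>y. pd i h y / g y ^ k - real k * h y * pd i g y / g y ^ Suc k) x"
      if x: "x \<in> interior S" for x
      unfolding ipd_snoc
      by (rule ipd_cong[OF open_interior _ x], rule pd_quot)
         (use h g in \<open>auto intro: smooth_ext_partial_differentiable[where js="[]", simplified]
            simp: nonvanishing_ext_def\<close>)
    also have "\<dots> x = ipd js (\<lambda>y. pd i h y / g y ^ k) x - ipd js (\<lambda>y. real k * h y * pd i g y / g y ^ Suc k) x"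
      if "x \<in> interior S" for x
      by (rule ipd_diff_interior[OF _ that]) (intro allI impI conjI IH smooth_ext_pd h dk; simp)
    finally have "\<And>x. x \<in> interior S \<Longrightarrow> ipd js (\<lambda>y. pd i h y / g y ^ k) x
        - ipd js (\<lambda>y. real k * h y * pd i g y / g y ^ Suc k) x = ipd is (\<lambda>y. h y / g y ^ k) x"
      using snoc by simp
    moreover have "boundary_regular S (\<lambda>x. ipd js (\<lambda>y. pd i h y / g y ^ k) x
        - ipd js (\<lambda>y. real k * h y * pd i g y / g y ^ Suc k) x)"
      by (intro boundary_regular_diff IH smooth_ext_pd h dk order_refl)
    ultimately show ?thesis by (rule boundary_regular_cong)
  qed
qed

lemma smooth_ext_quot:
  "smooth_ext S h \<Longrightarrow> smooth_ext S g \<Longrightarrow> nonvanishing_ext S g \<Longrightarrow> smooth_ext S (\<lambda>y. h y / g y ^ k)"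
  unfolding smooth_ext_def[of S "\<lambda>y. h y / g y ^ k"] by (blast intro: boundary_regular_ipd_quot)

lemma smooth_ext_divide:
  "smooth_ext S h \<Longrightarrow> smooth_ext S g \<Longrightarrow> nonvanishing_ext S g \<Longrightarrow> smooth_ext S (\<lambda>y. h y / g y)"
  using smooth_ext_quot[of S h g 1] by simp

lemma at_within_closure_neq_bot:
  fixes x :: "'a::perfect_space"
  assumes "open U" "x \<in> closure U"
  shows "at x within U \<noteq> bot"
proof (cases "x \<in> U")
  case True then show ?thesis using at_within_open[OF True assms(1)] by simp
next
  case False then have "U - {x} = U" by auto
  then show ?thesis using assms(2) by (simp add: at_within_eq_bot_iff)
qed

lemma jc_eqI:
  assumes "S \<subseteq> closure (interior S)" "x \<in> S" "(ipd is f \<longlongrightarrow> L) (at x within interior S)"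
  shows "jc S is f x = L"
proof -
  have "at x within interior S \<noteq> bot" using assms(1,2) by (intro at_within_closure_neq_bot) auto
  then show ?thesis unfolding jc_def using tendsto_Lim[OF _ assms(3)] by simp
qed

lemma jc_tendsto:
  assumes "S \<subseteq> closure (interior S)" "x \<in> S" "smooth_ext S f"
  shows "(ipd is f \<longlongrightarrow> jc S is f x) (at x within interior S)"
proof -
  obtain L where "(ipd is f \<longlongrightarrow> L) (at x within interior S)"
    using boundary_regularD(3)[OF smooth_ext_boundary_regular[OF assms(3)] assms(2)] by blast
  then show ?thesis using jc_eqI[OF assms(1,2)] by simp
qed

lemma jc_interior:
  assumes "S \<subseteq> closure (interior S)" "x \<in> interior S" "smooth_ext S f"
  shows "jc S is f x = ipd is f x"
proof (rule jc_eqI[OF assms(1)])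
  show "x \<in> S" using assms(2) interior_subset by blast
  show "(ipd is f \<longlongrightarrow> ipd is f x) (at x within interior S)"
    using smooth_ext_continuous_on[OF assms(3)] assms(2) unfolding continuous_on_def by blast
qed

lemma jc_cong:
  assumes "\<And>y. y \<in> interior S \<Longrightarrow> f y = g y"
  shows "jc S is f x = jc S is g x"
proof -
  have "\<And>y. y \<in> interior S \<Longrightarrow> ipd is f y = ipd is g y"
    by (rule ipd_cong[OF open_interior]) (use assms in auto)
  then have "eventually (\<lambda>y. ipd is f y = ipd is g y) (at x within interior S)"
    by (simp add: eventually_at_filter)
  then show ?thesis unfolding jc_def by (rule Lim_cong) simp
qed

lemma jc_snoc: "jc S (is @ [i]) f = jc S is (pd i f)"
  unfolding jc_def ipd_snoc ..

lemma jc_append: "jc S (is @ js) f = jc S is (ipd js f)"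
  unfolding jc_def ipd_append ..

lemma jc_Nil_smooth_upto: "smooth_upto S f \<Longrightarrow> x \<in> S \<Longrightarrow> jc S [] f x = f x"
  using jc_eqI[of S x "[]" f] unfolding smooth_upto_iff by simp

lemma
  assumes "S \<subseteq> closure (interior S)" "x \<in> S" "smooth_ext S f" "smooth_ext S g"
  shows jc_add: "jc S is (\<lambda>y. f y + g y) x = jc S is f x + jc S is g x"
    and jc_diff: "jc S is (\<lambda>y. f y - g y) x = jc S is f x - jc S is g x"
proof -
  note tf = jc_tendsto[OF assms(1,2,3), of "is"] and tg = jc_tendsto[OF assms(1,2,4), of "is"]
  have "eventually (\<lambda>y. ipd is f y + ipd is g y = ipd is (\<lambda>y. f y + g y) y) (at x within interior S)"
    "eventually (\<lambda>y. ipd is f y - ipd is g y = ipd is (\<lambda>y. f y - g y) y) (at x within interior S)"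
    using ipd_add[OF assms(3,4)] ipd_diff[OF assms(3,4)] by (simp_all add: eventually_at_filter)
  then have "(ipd is (\<lambda>y. f y + g y) \<longlongrightarrow> jc S is f x + jc S is g x) (at x within interior S)"
    "(ipd is (\<lambda>y. f y - g y) \<longlongrightarrow> jc S is f x - jc S is g x) (at x within interior S)"
    using tendsto_add[OF tf tg] tendsto_diff[OF tf tg] by (auto intro: Lim_transform_eventually)
  then show "jc S is (\<lambda>y. f y + g y) x = jc S is f x + jc S is g x"
    "jc S is (\<lambda>y. f y - g y) x = jc S is f x - jc S is g x"
    by (auto intro: jc_eqI[OF assms(1,2)])
qed

lemma jc_Nil_mult:
  assumes "S \<subseteq> closure (interior S)" "x \<in> S" "smooth_ext S f" "smooth_ext S g"
  shows "jc S [] (\<lambda>y. f y * g y) x = jc S [] f x * jc S [] g x"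
  using tendsto_mult[OF jc_tendsto[OF assms(1,2,3), of "[]"] jc_tendsto[OF assms(1,2,4), of "[]"]]
  by (intro jc_eqI[OF assms(1,2)]) simp

lemma jc_Nil_quot:
  assumes "S \<subseteq> closure (interior S)" "x \<in> S" "smooth_ext S h" "smooth_ext S g" "nonvanishing_ext S g"
  shows "jc S [] (\<lambda>y. h y / g y ^ k) x = jc S [] h x / jc S [] g x ^ k"
proof -
  obtain L where L: "(g \<longlongrightarrow> L) (at x within interior S)" "L \<noteq> 0"
    using assms(5,2) unfolding nonvanishing_ext_def by blast
  have "jc S [] g x = L" using jc_eqI[OF assms(1,2), of "[]" g] L by simp
  then show ?thesis
    using L jc_tendsto[OF assms(1,2,3), of "[]"]
    by (intro jc_eqI[OF assms(1,2)]) (auto intro!: tendsto_divide tendsto_power)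
qed

lemma jc_snoc_mult:
  assumes "S \<subseteq> closure (interior S)" "x \<in> S" "smooth_ext S u" "smooth_ext S v"
  shows "jc S (js @ [i]) (\<lambda>y. u y * v y) x = jc S js (\<lambda>y. pd i u y * v y) x + jc S js (\<lambda>y. u y * pd i v y) x"
proof -
  have "jc S (js @ [i]) (\<lambda>y. u y * v y) x = jc S js (\<lambda>y. pd i u y * v y + u y * pd i v y) x"
    unfolding jc_snoc using assms(3,4)
    by (intro jc_cong pd_mult smooth_ext_partial_differentiable[where js="[]", simplified])
  also have "\<dots> = jc S js (\<lambda>y. pd i u y * v y) x + jc S js (\<lambda>y. u y * pd i v y) x"
    by (rule jc_add[OF assms(1,2)]) (intro smooth_ext_mult smooth_ext_pd assms(3,4))+
  finally show ?thesis .
qed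

lemma jc_snoc_quot:
  assumes "S \<subseteq> closure (interior S)" "x \<in> S" "smooth_ext S h" "smooth_ext S g" "nonvanishing_ext S g"
  shows "jc S (js @ [i]) (\<lambda>y. h y / g y ^ k) x = jc S js (\<lambda>y. pd i h y / g y ^ k) x
          - jc S js (\<lambda>y. real k * h y * pd i g y / g y ^ Suc k) x"
proof -
  have "jc S (js @ [i]) (\<lambda>y. h y / g y ^ k) x
      = jc S js (\<lambda>y. pd i h y / g y ^ k - real k * h y * pd i g y / g y ^ Suc k) x"
    unfolding jc_snoc using assms(3,4,5)
    by (intro jc_cong pd_quot smooth_ext_partial_differentiable[where js="[]", simplified])
       (auto simp: nonvanishing_ext_def)
  also have "\<dots> = jc S js (\<lambda>y. pd i h y / g y ^ k) x - jc S js (\<lambda>y. real k * h y * pd i g y / g y ^ Suc k) x"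
    by (rule jc_diff[OF assms(1,2)]) (intro smooth_ext_quot smooth_ext_mult smooth_ext_pd smooth_ext_const assms(3,4,5))+
  finally show ?thesis .
qed

text \<open>Only the normal derivatives in \<open>is\<close> are bounded by \<open>m\<close>: this is the quantity controlled by
  the induction on the equation \<open>L\<^sub>H f = 0\<close>.\<close>

definition jets_agree :: "'n \<Rightarrow> (real^'n) set \<Rightarrow> (real^'n) set \<Rightarrow> nat \<Rightarrow>
    (real^'n \<Rightarrow> real) \<Rightarrow> (real^'n \<Rightarrow> real) \<Rightarrow> bool" where
  "jets_agree N S B m u v \<longleftrightarrow> (\<forall>is. \<forall>x\<in>B. count_list is N \<le> m \<longrightarrow> jc S is u x = jc S is v x)"

lemma jets_agreeD:
  "jets_agree N S B m u v \<Longrightarrow> x \<in> B \<Longrightarrow> count_list is N \<le> m \<Longrightarrow> jc S is u x = jc S is v x"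
  unfolding jets_agree_def by blast

lemma jets_agree_mono: "jets_agree N S B m u v \<Longrightarrow> m' \<le> m \<Longrightarrow> jets_agree N S B m' u v"
  unfolding jets_agree_def by force

lemma jets_agree_refl: "jets_agree N S B m u u"
  unfolding jets_agree_def by simp

lemma jets_agree_pd:
  assumes "jets_agree N S B m u v" "m' + (if i = N then 1 else 0) \<le> m"
  shows "jets_agree N S B m' (pd i u) (pd i v)"
  unfolding jets_agree_def
proof (intro allI ballI impI)
  fix "is" x assume x: "x \<in> B" and c: "count_list is N \<le> m'"
  have "count_list (is @ [i]) N \<le> m" using c assms(2) by (auto split: if_splits)
  then have "jc S (is @ [i]) u x = jc S (is @ [i]) v x" by (rule jets_agreeD[OF assms(1) x])
  then show "jc S is (pd i u) x = jc S is (pd i v) x" by (simp add: jc_snoc)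
qed

lemma
  assumes "S \<subseteq> closure (interior S)" "B \<subseteq> S"
    "smooth_ext S u1" "smooth_ext S u2" "smooth_ext S v1" "smooth_ext S v2"
    "jets_agree N S B m u1 u2" "jets_agree N S B m v1 v2"
  shows jets_agree_add: "jets_agree N S B m (\<lambda>y. u1 y + v1 y) (\<lambda>y. u2 y + v2 y)"
    and jets_agree_diff: "jets_agree N S B m (\<lambda>y. u1 y - v1 y) (\<lambda>y. u2 y - v2 y)"
  using assms jets_agreeD[OF assms(7)] jets_agreeD[OF assms(8)]
  by (auto simp: jets_agree_def jc_add jc_diff subsetD)

text \<open>The Leibniz and quotient rules turn a derivative of order \<open>js @ [i]\<close> of a product or quotient
  into derivatives of order \<open>js\<close> of new products and quotients, with no more normal derivatives;
  hence the inductions on \<open>js\<close> with all the functions generalised.\<close>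

lemma jets_agree_mult:
  assumes reg: "S \<subseteq> closure (interior S)" and B: "B \<subseteq> S"
    and "smooth_ext S u1" "smooth_ext S u2" "smooth_ext S v1" "smooth_ext S v2"
    and "jets_agree N S B m u1 u2" "jets_agree N S B m v1 v2"
  shows "jets_agree N S B m (\<lambda>y. u1 y * v1 y) (\<lambda>y. u2 y * v2 y)"
  unfolding jets_agree_def
proof (intro allI ballI impI)
  fix "is" x assume x: "x \<in> B" and "count_list is N \<le> m"
  with assms(3-8) show "jc S is (\<lambda>y. u1 y * v1 y) x = jc S is (\<lambda>y. u2 y * v2 y) x"
  proof (induction "is" arbitrary: m u1 u2 v1 v2 rule: rev_induct)
    case Nil
    with x B show ?case using jc_Nil_mult[OF reg] jets_agreeD[of N S B m _ _ x "[]"] by auto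
  next
    case (snoc i js)
    define m' where "m' = (if i = N then m - 1 else m)"
    have c: "count_list js N \<le> m'" and mm: "m' + (if i = N then 1 else 0) \<le> m"
      using \<open>count_list (js @ [i]) N \<le> m\<close> unfolding m'_def by (auto split: if_splits)
    note u = snoc.prems(1,2) and v = snoc.prems(3,4)
    have du: "jets_agree N S B m' (pd i u1) (pd i u2)" by (rule jets_agree_pd[OF snoc.prems(5) mm])
    have dv: "jets_agree N S B m' (pd i v1) (pd i v2)" by (rule jets_agree_pd[OF snoc.prems(6) mm])
    have au: "jets_agree N S B m' u1 u2" by (rule jets_agree_mono[OF snoc.prems(5)]) (use mm in simp)
    have av: "jets_agree N S B m' v1 v2" by (rule jets_agree_mono[OF snoc.prems(6)]) (use mm in simp)
    have "jc S js (\<lambda>y. pd i u1 y * v1 y) x = jc S js (\<lambda>y. pd i u2 y * v2 y) x"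
      by (rule snoc.IH[OF smooth_ext_pd[OF u(1)] smooth_ext_pd[OF u(2)] v du av x c])
    moreover have "jc S js (\<lambda>y. u1 y * pd i v1 y) x = jc S js (\<lambda>y. u2 y * pd i v2 y) x"
      by (rule snoc.IH[OF u smooth_ext_pd[OF v(1)] smooth_ext_pd[OF v(2)] au dv x c])
    ultimately show ?case
      using x B snoc.prems jc_snoc_mult[OF reg, of x u1 v1] jc_snoc_mult[OF reg, of x u2 v2] by auto
  qed
qed

lemma jets_agree_quot:
  assumes reg: "S \<subseteq> closure (interior S)" and B: "B \<subseteq> S"
    and "smooth_ext S h1" "smooth_ext S h2" "smooth_ext S g1" "smooth_ext S g2"
    and "nonvanishing_ext S g1" "nonvanishing_ext S g2"
    and "jets_agree N S B m h1 h2" "jets_agree N S B m g1 g2"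
  shows "jets_agree N S B m (\<lambda>y. h1 y / g1 y ^ k) (\<lambda>y. h2 y / g2 y ^ k)"
  unfolding jets_agree_def
proof (intro allI ballI impI)
  fix "is" x assume x: "x \<in> B" and "count_list is N \<le> m"
  with assms(3-10) show "jc S is (\<lambda>y. h1 y / g1 y ^ k) x = jc S is (\<lambda>y. h2 y / g2 y ^ k) x"
  proof (induction "is" arbitrary: m h1 h2 k rule: rev_induct)
    case Nil
    with x B show ?case using jc_Nil_quot[OF reg] jets_agreeD[of N S B m _ _ x "[]"] by auto
  next
    case (snoc i js)
    define m' where "m' = (if i = N then m - 1 else m)"
    have c: "count_list js N \<le> m'" and mm: "m' + (if i = N then 1 else 0) \<le> m"
      using \<open>count_list (js @ [i]) N \<le> m\<close> unfolding m'_def by (auto split: if_splits)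
    note h = snoc.prems(1,2) and g = snoc.prems(3-6)
    have ah: "jets_agree N S B m' h1 h2" by (rule jets_agree_mono[OF snoc.prems(7)]) (use mm in simp)
    have ag: "jets_agree N S B m' g1 g2" by (rule jets_agree_mono[OF snoc.prems(8)]) (use mm in simp)
    have "jc S js (\<lambda>y. pd i h1 y / g1 y ^ k) x = jc S js (\<lambda>y. pd i h2 y / g2 y ^ k) x"
      by (rule snoc.IH[OF smooth_ext_pd[OF h(1)] smooth_ext_pd[OF h(2)] g
            jets_agree_pd[OF snoc.prems(7) mm] ag x c])
    moreover have "jc S js (\<lambda>y. real k * h1 y * pd i g1 y / g1 y ^ Suc k) x
        = jc S js (\<lambda>y. real k * h2 y * pd i g2 y / g2 y ^ Suc k) x"
    proof (rule snoc.IH[OF _ _ g _ ag x c])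
      show "jets_agree N S B m' (\<lambda>y. real k * h1 y * pd i g1 y) (\<lambda>y. real k * h2 y * pd i g2 y)"
        by (intro jets_agree_mult[OF reg B] smooth_ext_mult smooth_ext_const smooth_ext_pd h g
            jets_agree_refl ah jets_agree_pd[OF snoc.prems(8) mm])
    qed (intro smooth_ext_mult smooth_ext_const smooth_ext_pd h g)+
    ultimately show ?case
      using x B snoc.prems jc_snoc_quot[OF reg, of x h1 g1] jc_snoc_quot[OF reg, of x h2 g2] by auto
  qed
qed

lemma jets_agree_divide:
  assumes "S \<subseteq> closure (interior S)" "B \<subseteq> S"
    "smooth_ext S h1" "smooth_ext S h2" "smooth_ext S g1" "smooth_ext S g2"
    "nonvanishing_ext S g1" "nonvanishing_ext S g2"
    "jets_agree N S B m h1 h2" "jets_agree N S B m g1 g2"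
  shows "jets_agree N S B m (\<lambda>y. h1 y / g1 y) (\<lambda>y. h2 y / g2 y)"
  using jets_agree_quot[OF assms, of 1] by simp

lemma jets_agree_sum:
  assumes "S \<subseteq> closure (interior S)" "B \<subseteq> S" "finite A"
    "\<And>a. a \<in> A \<Longrightarrow> smooth_ext S (f a)" "\<And>a. a \<in> A \<Longrightarrow> smooth_ext S (g a)"
    "\<And>a. a \<in> A \<Longrightarrow> jets_agree N S B m (f a) (g a)"
  shows "jets_agree N S B m (\<lambda>y. \<Sum>a\<in>A. f a y) (\<lambda>y. \<Sum>a\<in>A. g a y)"
  using assms(3-6)
  by (induction A rule: finite_induct)
     (auto simp: jets_agree_refl intro!: jets_agree_add[OF assms(1,2)] smooth_ext_sum)

lemma jets_agree_prod:
  assumes "S \<subseteq> closure (interior S)" "B \<subseteq> S" "finite A"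
    "\<And>a. a \<in> A \<Longrightarrow> smooth_ext S (f a)" "\<And>a. a \<in> A \<Longrightarrow> smooth_ext S (g a)"
    "\<And>a. a \<in> A \<Longrightarrow> jets_agree N S B m (f a) (g a)"
  shows "jets_agree N S B m (\<lambda>y. \<Prod>a\<in>A. f a y) (\<lambda>y. \<Prod>a\<in>A. g a y)"
  using assms(3-6)
  by (induction A rule: finite_induct)
     (auto simp: jets_agree_refl intro!: jets_agree_mult[OF assms(1,2)] smooth_ext_prod)

lemma second_difference_mvt:
  fixes x :: "real^'n"
  assumes h: "h > 0"
    and inU: "\<And>s t. 0 \<le> s \<Longrightarrow> s \<le> h \<Longrightarrow> 0 \<le> t \<Longrightarrow> t \<le> h \<Longrightarrow> x + s *\<^sub>R axis i 1 + t *\<^sub>R axis j 1 \<in> U"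
    and l1: "\<And>y. y \<in> U \<Longrightarrow> partial_differentiable f y i" and l2: "\<And>y. y \<in> U \<Longrightarrow> partial_differentiable (pd i f) y j"
  shows "\<exists>\<sigma> \<tau>. 0 < \<sigma> \<and> \<sigma> < h \<and> 0 < \<tau> \<and> \<tau> < h \<and>
    f (x + h *\<^sub>R axis i 1 + h *\<^sub>R axis j 1) - f (x + h *\<^sub>R axis i 1) - f (x + h *\<^sub>R axis j 1) + f x
     = h * h * pd j (pd i f) (x + \<sigma> *\<^sub>R axis i 1 + \<tau> *\<^sub>R axis j 1)"
proof -
  define ei where "ei = (axis i 1 :: real^'n)"
  define ej where "ej = (axis j 1 :: real^'n)"
  define \<phi> where "\<phi> s = f ((x + h *\<^sub>R ej) + s *\<^sub>R ei) - f (x + s *\<^sub>R ei)" for s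
  have d\<phi>: "DERIV \<phi> s :> pd i f ((x + h *\<^sub>R ej) + s *\<^sub>R ei) - pd i f (x + s *\<^sub>R ei)" if "0 \<le> s" "s \<le> h" for s
  proof -
    have a: "x + h *\<^sub>R ej + s *\<^sub>R ei \<in> U" using inU[of s h] that h unfolding ei_def ej_def by (simp add: algebra_simps)
    have b: "x + s *\<^sub>R ei \<in> U" using inU[of s 0] that h unfolding ei_def ej_def by simp
    show ?thesis unfolding \<phi>_def ei_def
      by (intro DERIV_diff line_has_real_derivative l1) (use a b in \<open>simp_all add: ei_def\<close>)
  qed
  obtain \<sigma> where \<sigma>: "0 < \<sigma>" "\<sigma> < h" "\<phi> h - \<phi> 0 = (h - 0) * (pd i f ((x + h *\<^sub>R ej) + \<sigma> *\<^sub>R ei) - pd i f (x + \<sigma> *\<^sub>R ei))"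
    using MVT2[OF h, of \<phi> "\<lambda>s. pd i f ((x + h *\<^sub>R ej) + s *\<^sub>R ei) - pd i f (x + s *\<^sub>R ei)"] d\<phi> by blast
  define \<psi> where "\<psi> t = pd i f ((x + \<sigma> *\<^sub>R ei) + t *\<^sub>R ej)" for t
  have d\<psi>: "DERIV \<psi> t :> pd j (pd i f) ((x + \<sigma> *\<^sub>R ei) + t *\<^sub>R ej)" if "0 \<le> t" "t \<le> h" for t
  proof -
    have a: "x + \<sigma> *\<^sub>R ei + t *\<^sub>R ej \<in> U" using inU[of \<sigma> t] that \<sigma> unfolding ei_def ej_def by simp
    show ?thesis unfolding \<psi>_def ej_def
      by (intro line_has_real_derivative l2) (use a in \<open>simp add: ej_def\<close>)
  qed
  obtain \<tau> where \<tau>: "0 < \<tau>" "\<tau> < h" "\<psi> h - \<psi> 0 = (h - 0) * pd j (pd i f) ((x + \<sigma> *\<^sub>R ei) + \<tau> *\<^sub>R ej)"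
    using MVT2[OF h, of \<psi> "\<lambda>t. pd j (pd i f) ((x + \<sigma> *\<^sub>R ei) + t *\<^sub>R ej)"] d\<psi> by blast
  have e1: "pd i f ((x + h *\<^sub>R ej) + \<sigma> *\<^sub>R ei) - pd i f (x + \<sigma> *\<^sub>R ei) = \<psi> h - \<psi> 0"
    unfolding \<psi>_def by (simp add: algebra_simps)
  have "f (x + h *\<^sub>R ei + h *\<^sub>R ej) - f (x + h *\<^sub>R ei) - f (x + h *\<^sub>R ej) + f x = \<phi> h - \<phi> 0"
    unfolding \<phi>_def by (simp add: algebra_simps)
  also have "\<dots> = h * h * pd j (pd i f) (x + \<sigma> *\<^sub>R ei + \<tau> *\<^sub>R ej)"
    using \<sigma>(3) e1 \<tau>(3) by simp
  finally show ?thesis using \<sigma> \<tau> unfolding ei_def ej_def by blast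
qed

lemma dist_two_axes:
  fixes x :: "real^'n"
  shows "dist (x + s *\<^sub>R axis i 1 + t *\<^sub>R axis j 1) x \<le> \<bar>s\<bar> + \<bar>t\<bar>"
  using norm_triangle_ineq[of "s *\<^sub>R axis i (1::real)" "t *\<^sub>R axis j (1::real)"]
  by (simp add: dist_norm add.assoc)

lemma second_difference_approx:
  fixes x :: "real^'n"
  assumes U: "open U" "x \<in> U"
    and l: "\<And>y. y \<in> U \<Longrightarrow> partial_differentiable f y i" "\<And>y. y \<in> U \<Longrightarrow> partial_differentiable (pd i f) y j"
    and c: "isCont (pd j (pd i f)) x" and \<epsilon>: "\<epsilon> > 0"
  obtains h0 where "h0 > 0" "\<And>h. 0 < h \<Longrightarrow> h < h0 \<Longrightarrow>
    \<bar>(f (x + h *\<^sub>R axis i 1 + h *\<^sub>R axis j 1) - f (x + h *\<^sub>R axis i 1) - f (x + h *\<^sub>R axis j 1) + f x) / (h * h)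
      - pd j (pd i f) x\<bar> < \<epsilon>"
proof -
  obtain r where r: "r > 0" "ball x r \<subseteq> U" using U openE by blast
  obtain d where d: "d > 0" "\<And>y. dist y x < d \<Longrightarrow> dist (pd j (pd i f) y) (pd j (pd i f) x) < \<epsilon>"
    using c \<epsilon> unfolding continuous_at_eps_delta by blast
  show ?thesis
  proof (rule that[of "min r d / 2"])
    fix h :: real assume h: "0 < h" "h < min r d / 2"
    have "dist (x + s *\<^sub>R axis i 1 + t *\<^sub>R axis j 1) x < min r d" if "0 \<le> s" "s \<le> h" "0 \<le> t" "t \<le> h" for s t
      using dist_two_axes[of x s i t j] that h by linarith
    then obtain \<sigma> \<tau> where st: "0 < \<sigma>" "\<sigma> < h" "0 < \<tau>" "\<tau> < h"
      "f (x + h *\<^sub>R axis i 1 + h *\<^sub>R axis j 1) - f (x + h *\<^sub>R axis i 1) - f (x + h *\<^sub>R axis j 1) + f x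
        = h * h * pd j (pd i f) (x + \<sigma> *\<^sub>R axis i 1 + \<tau> *\<^sub>R axis j 1)"
      using second_difference_mvt[OF h(1), of x i j U f] l r(2) by (force simp: dist_commute)
    moreover have "dist (x + \<sigma> *\<^sub>R axis i 1 + \<tau> *\<^sub>R axis j 1) x < d"
      using dist_two_axes[of x \<sigma> i \<tau> j] st h by auto
    ultimately show "\<bar>(f (x + h *\<^sub>R axis i 1 + h *\<^sub>R axis j 1) - f (x + h *\<^sub>R axis i 1)
        - f (x + h *\<^sub>R axis j 1) + f x) / (h * h) - pd j (pd i f) x\<bar> < \<epsilon>"
      using d(2) h(1) by (simp add: dist_real_def)
  qed (use r d in simp)
qed

text \<open>Schwarz's theorem: the second difference quotient is symmetric in \<open>i\<close> and \<open>j\<close> and tends to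
  both mixed partial derivatives.\<close>

lemma pd_commute_open:
  fixes x :: "real^'n"
  assumes U: "open U" "x \<in> U"
    and l: "\<And>y k. y \<in> U \<Longrightarrow> partial_differentiable f y k" "\<And>y k. y \<in> U \<Longrightarrow> partial_differentiable (pd i f) y k"
      "\<And>y k. y \<in> U \<Longrightarrow> partial_differentiable (pd j f) y k"
    and c: "isCont (pd j (pd i f)) x" "isCont (pd i (pd j f)) x"
  shows "pd j (pd i f) x = pd i (pd j f) x"
proof (rule ccontr)
  define \<epsilon> where "\<epsilon> = \<bar>pd j (pd i f) x - pd i (pd j f) x\<bar> / 2"
  assume "pd j (pd i f) x \<noteq> pd i (pd j f) x"
  then have \<epsilon>: "\<epsilon> > 0" unfolding \<epsilon>_def by simp
  obtain h1 where h1: "h1 > 0" "\<And>h. 0 < h \<Longrightarrow> h < h1 \<Longrightarrow>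
    \<bar>(f (x + h *\<^sub>R axis i 1 + h *\<^sub>R axis j 1) - f (x + h *\<^sub>R axis i 1) - f (x + h *\<^sub>R axis j 1) + f x) / (h * h)
      - pd j (pd i f) x\<bar> < \<epsilon>"
    using second_difference_approx[OF U l(1,2) c(1) \<epsilon>] by blast
  obtain h2 where h2: "h2 > 0" "\<And>h. 0 < h \<Longrightarrow> h < h2 \<Longrightarrow>
    \<bar>(f (x + h *\<^sub>R axis j 1 + h *\<^sub>R axis i 1) - f (x + h *\<^sub>R axis j 1) - f (x + h *\<^sub>R axis i 1) + f x) / (h * h)
      - pd i (pd j f) x\<bar> < \<epsilon>"
    using second_difference_approx[OF U l(1,3) c(2) \<epsilon>] by blast
  define h where "h = min h1 h2 / 2"
  have h: "0 < h" "h < h1" "h < h2" using h1 h2 unfolding h_def by auto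
  define Q where "Q = (f (x + h *\<^sub>R axis i 1 + h *\<^sub>R axis j 1) - f (x + h *\<^sub>R axis i 1)
    - f (x + h *\<^sub>R axis j 1) + f x) / (h * h)"
  have "\<bar>Q - pd j (pd i f) x\<bar> < \<epsilon>" using h1(2)[OF h(1,2)] unfolding Q_def .
  moreover have "\<bar>Q - pd i (pd j f) x\<bar> < \<epsilon>" using h2(2)[OF h(1,3)] unfolding Q_def by (simp add: algebra_simps)
  ultimately show False
    using abs_triangle_ineq[of "pd j (pd i f) x - Q" "Q - pd i (pd j f) x"] unfolding \<epsilon>_def
    by (simp add: abs_minus_commute)
qed

lemma pd_commute:
  assumes "smooth_ext S f" "x \<in> interior S"
  shows "pd j (pd i f) x = pd i (pd j f) x"
proof (rule pd_commute_open[OF open_interior assms(2)])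
  fix y k assume "y \<in> interior S"
  then show "partial_differentiable f y k" "partial_differentiable (pd i f) y k"
    "partial_differentiable (pd j f) y k"
    using smooth_ext_partial_differentiable[OF assms(1)] by (metis ipd.simps)+
next
  show "isCont (pd j (pd i f)) x" "isCont (pd i (pd j f)) x"
    using smooth_ext_continuous_on[OF assms(1), of "[j, i]"] smooth_ext_continuous_on[OF assms(1), of "[i, j]"]
      assms(2) by (simp_all add: continuous_on_eq_continuous_at)
qed

lemma ipd_swap:
  assumes "smooth_ext S f" "x \<in> interior S"
  shows "ipd (as @ i # j # bs) f x = ipd (as @ j # i # bs) f x"
proof -
  have "\<And>y. y \<in> interior S \<Longrightarrow> ipd (i # j # bs) f y = ipd (j # i # bs) f y"
    using pd_commute[OF smooth_ext_ipd[OF assms(1), of bs]] by simp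
  then have "ipd as (ipd (i # j # bs) f) x = ipd as (ipd (j # i # bs) f) x"
    by (intro ipd_cong[OF open_interior _ assms(2)])
  then show ?thesis by (simp add: ipd_append)
qed

lemma ipd_move_to_front:
  assumes "smooth_ext S f"
  shows "a \<in> set xs \<Longrightarrow> x \<in> interior S \<Longrightarrow> ipd xs f x = ipd (a # remove1 a xs) f x"
proof (induction xs arbitrary: x)
  case (Cons b ys)
  show ?case
  proof (cases "a = b")
    case False
    then have a: "a \<in> set ys" using Cons.prems by simp
    have "ipd (b # ys) f x = pd b (ipd ys f) x" by simp
    also have "\<dots> = pd b (ipd (a # remove1 a ys) f) x"
      by (rule pd_cong[OF open_interior Cons.prems(2)]) (rule Cons.IH[OF a])
    also have "\<dots> = ipd ([] @ a # b # remove1 a ys) f x"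
      using ipd_swap[OF assms Cons.prems(2), of "[]" b a] by simp
    finally show ?thesis using False by simp
  qed simp
qed simp

lemma ipd_perm:
  assumes "smooth_ext S f"
  shows "mset xs = mset ys \<Longrightarrow> x \<in> interior S \<Longrightarrow> ipd xs f x = ipd ys f x"
proof (induction xs arbitrary: ys x)
  case (Cons a xs)
  have a: "a \<in> set ys" using Cons.prems(1) by (metis list.set_intros(1) set_mset_mset)
  have "mset xs = mset (remove1 a ys)" using Cons.prems(1) by (simp add: mset_remove1 flip: Cons.prems(1))
  then have "ipd (a # xs) f x = pd a (ipd (remove1 a ys) f) x"
    using pd_cong[OF open_interior Cons.prems(2), of "ipd xs f" "ipd (remove1 a ys) f" a] Cons.IH
    by simp
  also have "\<dots> = ipd ys f x" using ipd_move_to_front[OF assms a Cons.prems(2)] by simp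
  finally show ?case .
qed simp

lemma jc_perm:
  assumes "smooth_ext S f" "mset xs = mset ys"
  shows "jc S xs f x = jc S ys f x"
proof -
  have "eventually (\<lambda>y. ipd xs f y = ipd ys f y) (at x within interior S)"
    using ipd_perm[OF assms] by (simp add: eventually_at_filter)
  then show ?thesis unfolding jc_def by (rule Lim_cong) simp
qed

lemma mset_filter_replicate_count:
  "mset xs = mset (filter (\<lambda>a. a \<noteq> N) xs @ replicate (count_list xs N) N)"
  by (induction xs) auto

lemma openin_halfspace_ball:
  assumes "openin (top_of_set (halfspace N)) S" "x \<in> S"
  obtains r where "r > 0" "\<And>y. y $ N \<ge> 0 \<Longrightarrow> dist y x < r \<Longrightarrow> y \<in> S"
proof -
  obtain r where "r > 0" "\<forall>y\<in>halfspace N. dist y x < r \<longrightarrow> y \<in> S"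
    using assms unfolding openin_euclidean_subtopology_iff by (metis dist_commute)
  then show ?thesis using that unfolding halfspace_def by auto
qed

lemma component_dist_le: "\<bar>z $ N - y $ N\<bar> \<le> dist z (y :: real^'n)"
  unfolding dist_norm using component_le_norm_cart[of "z - y" N] by simp

lemma halfspace_pos_in_interior:
  fixes x y :: "real^'n"
  assumes r: "\<And>z. z $ N \<ge> 0 \<Longrightarrow> dist z x < r \<Longrightarrow> z \<in> S" and y: "y $ N > 0" "dist y x < r"
  shows "y \<in> interior S"
proof -
  define \<rho> where "\<rho> = min (y $ N) (r - dist y x)"
  have "ball y \<rho> \<subseteq> S"
  proof
    fix z assume "z \<in> ball y \<rho>"
    then have d: "dist z y < \<rho>" by (simp add: dist_commute)
    have "z $ N \<ge> 0" using component_dist_le[of z N y] d unfolding \<rho>_def by auto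
    moreover have "dist z x < r" using dist_triangle[of z x y] d unfolding \<rho>_def by auto
    ultimately show "z \<in> S" using r by blast
  qed
  moreover have "\<rho> > 0" using y unfolding \<rho>_def by auto
  ultimately show ?thesis by (meson interiorI open_ball centre_in_ball)
qed

lemma halfspace_shifted_segment_interior:
  fixes x :: "real^'n"
  assumes r: "\<And>z. z $ N \<ge> 0 \<Longrightarrow> dist z x < r \<Longrightarrow> z \<in> S"
    and "x $ N = 0" "i \<noteq> N" "0 < s" "0 \<le> \<tau>" "s + \<tau> < r"
  shows "x + s *\<^sub>R axis N 1 + \<tau> *\<^sub>R axis i 1 \<in> interior S"
proof (rule halfspace_pos_in_interior[OF r])
  show "(x + s *\<^sub>R axis N 1 + \<tau> *\<^sub>R axis i 1) $ N > 0" using assms(2-4) by (simp add: axis_def)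
  show "dist (x + s *\<^sub>R axis N 1 + \<tau> *\<^sub>R axis i 1) x < r"
    using dist_two_axes[of x s N \<tau> i] assms(4-6) by simp
qed

lemma segment_difference_lower_bound:
  assumes u: "smooth_ext S u" and t: "0 < t"
    and seg: "\<And>\<tau>. 0 \<le> \<tau> \<Longrightarrow> \<tau> \<le> t \<Longrightarrow> q + \<tau> *\<^sub>R axis i 1 \<in> interior S"
    and c: "\<And>\<tau>. 0 < \<tau> \<Longrightarrow> \<tau> < t \<Longrightarrow> c \<le> \<bar>pd i u (q + \<tau> *\<^sub>R axis i 1)\<bar>"
  shows "t * c \<le> \<bar>u (q + t *\<^sub>R axis i 1) - u q\<bar>"
proof -
  have "DERIV (\<lambda>\<tau>. u (q + \<tau> *\<^sub>R axis i 1)) \<tau> :> pd i u (q + \<tau> *\<^sub>R axis i 1)" if "0 \<le> \<tau>" "\<tau> \<le> t" for \<tau>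
    using smooth_ext_partial_differentiable[OF u seg[OF that], of "[]"] by (intro line_has_real_derivative) simp
  then have "\<exists>\<tau>>0. \<tau> < t \<and> u (q + t *\<^sub>R axis i 1) - u (q + 0 *\<^sub>R axis i 1) = (t - 0) * pd i u (q + \<tau> *\<^sub>R axis i 1)"
    by (rule MVT2[OF t])
  then obtain \<tau> where "0 < \<tau>" "\<tau> < t" "u (q + t *\<^sub>R axis i 1) - u q = t * pd i u (q + \<tau> *\<^sub>R axis i 1)"
    by auto
  then show ?thesis using t c[of \<tau>] by (simp add: abs_mult mult_left_mono)
qed

lemma jc_Nil_zero_eventually:
  assumes "S \<subseteq> closure (interior S)" "w \<in> S" "smooth_ext S u" "jc S [] u w = 0" "\<eta> > 0"
  obtains d where "d > 0" "\<And>y. y \<in> interior S \<Longrightarrow> y \<noteq> w \<Longrightarrow> dist y w < d \<Longrightarrow> \<bar>u y\<bar> < \<eta>"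
proof -
  have "(u \<longlongrightarrow> 0) (at w within interior S)" using jc_tendsto[OF assms(1-3), of "[]"] assms(4) by simp
  then obtain d where "d > 0" "\<forall>y\<in>interior S. y \<noteq> w \<and> dist y w < d \<longrightarrow> dist (u y) 0 < \<eta>"
    using assms(5) unfolding tendsto_iff eventually_at by blast
  then show ?thesis using that by simp
qed

text \<open>A function vanishing on the boundary has vanishing tangential derivatives there: otherwise
  \<open>\<partial>\<^sub>i u\<close> stays away from \<open>0\<close> on a short segment in direction \<open>i\<close> just above the boundary, while by the
  mean value theorem the difference of \<open>u\<close> between the (nearly boundary) endpoints must be small.\<close>

lemma jc_tangential_vanishing:
  assumes S_open: "openin (top_of_set (halfspace N)) S" and reg: "S \<subseteq> closure (interior S)"
    and u: "smooth_ext S u" and z: "\<And>y. y \<in> S \<Longrightarrow> y $ N = 0 \<Longrightarrow> jc S [] u y = 0"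
    and x: "x \<in> S" "x $ N = 0" and iN: "i \<noteq> N"
  shows "jc S [i] u x = 0"
proof (rule ccontr)
  define L where "L = jc S [i] u x"
  assume "jc S [i] u x \<noteq> 0"
  then have L0: "\<bar>L\<bar> > 0" unfolding L_def by simp
  have "(pd i u \<longlongrightarrow> L) (at x within interior S)"
    using jc_tendsto[OF reg x(1) u, of "[i]"] unfolding L_def by simp
  then obtain \<delta> where \<delta>: "\<delta> > 0" "\<And>y. y \<in> interior S \<Longrightarrow> y \<noteq> x \<Longrightarrow> dist y x < \<delta> \<Longrightarrow> dist (pd i u y) L < \<bar>L\<bar> / 2"
    using L0 unfolding tendsto_iff eventually_at by (metis half_gt_zero)
  obtain r where r: "r > 0" "\<And>y. y $ N \<ge> 0 \<Longrightarrow> dist y x < r \<Longrightarrow> y \<in> S"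
    using openin_halfspace_ball[OF S_open x(1)] by blast
  define t where "t = min \<delta> r / 3"
  have t: "t > 0" "2 * t < \<delta>" "2 * t < r" using \<delta> r unfolding t_def by auto
  define \<eta> where "\<eta> = t * \<bar>L\<bar> / 8"
  define p where "p = x + t *\<^sub>R axis i 1"
  have pN: "p $ N = 0" using x(2) iN unfolding p_def by (simp add: axis_def)
  have "dist p x = t" using t unfolding p_def by (simp add: dist_norm)
  then have p: "p \<in> S" "p $ N = 0" using r(2)[of p] pN t by auto
  have \<eta>: "\<eta> > 0" using t L0 unfolding \<eta>_def by simp
  obtain \<delta>p where \<delta>p: "\<delta>p > 0" "\<And>y. y \<in> interior S \<Longrightarrow> y \<noteq> p \<Longrightarrow> dist y p < \<delta>p \<Longrightarrow> \<bar>u y\<bar> < \<eta>"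
    using jc_Nil_zero_eventually[OF reg p(1) u z[OF p] \<eta>] by blast
  obtain \<delta>x where \<delta>x: "\<delta>x > 0" "\<And>y. y \<in> interior S \<Longrightarrow> y \<noteq> x \<Longrightarrow> dist y x < \<delta>x \<Longrightarrow> \<bar>u y\<bar> < \<eta>"
    using jc_Nil_zero_eventually[OF reg x(1) u z[OF x] \<eta>] by blast
  define s where "s = min t (min \<delta>x \<delta>p) / 2"
  have s: "s > 0" "s < t" "s < \<delta>x" "s < \<delta>p" using t \<delta>x \<delta>p unfolding s_def by auto
  define q where "q = x + s *\<^sub>R axis N 1"
  have seg: "q + \<tau> *\<^sub>R axis i 1 \<in> interior S" if "0 \<le> \<tau>" "\<tau> \<le> t" for \<tau>
    unfolding q_def using halfspace_shifted_segment_interior[OF r(2) x(2) iN s(1) that(1)] that s t by simp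
  have "t * (\<bar>L\<bar> / 2) \<le> \<bar>u (q + t *\<^sub>R axis i 1) - u q\<bar>"
  proof (rule segment_difference_lower_bound[OF u t(1) seg])
    fix \<tau> assume \<tau>: "0 < \<tau>" "\<tau> < t"
    have "(q + \<tau> *\<^sub>R axis i 1) $ N \<noteq> x $ N" using x(2) iN s unfolding q_def by (simp add: axis_def)
    then have ne: "q + \<tau> *\<^sub>R axis i 1 \<noteq> x" by auto
    have "dist (q + \<tau> *\<^sub>R axis i 1) x \<le> s + \<tau>"
      using dist_two_axes[of x s N \<tau> i] s \<tau> unfolding q_def by simp
    then have "dist (pd i u (q + \<tau> *\<^sub>R axis i 1)) L < \<bar>L\<bar> / 2"
      using \<delta>(2)[OF seg ne] \<tau> s t by simp
    then show "\<bar>L\<bar> / 2 \<le> \<bar>pd i u (q + \<tau> *\<^sub>R axis i 1)\<bar>" unfolding dist_real_def by linarith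
  qed simp_all
  moreover have "dist (q + t *\<^sub>R axis i 1) p = s" "q + t *\<^sub>R axis i 1 \<noteq> p"
    using s unfolding q_def p_def by (auto simp: dist_norm)
  then have "\<bar>u (q + t *\<^sub>R axis i 1)\<bar> < \<eta>" using \<delta>p(2) seg[of t] t s by auto
  moreover have "\<bar>u q\<bar> < \<eta>"
    using \<delta>x(2)[of q] seg[of 0] s t unfolding q_def by (auto simp: dist_norm)
  moreover have "t * \<bar>L\<bar> > 0" using t L0 by simp
  ultimately show False
    using abs_triangle_ineq4[of "u (q + t *\<^sub>R axis i 1)" "u q"] unfolding \<eta>_def by simp
qed

lemma jc_tangentials_vanishing:
  assumes S_open: "openin (top_of_set (halfspace N)) S" and reg: "S \<subseteq> closure (interior S)"
    and u: "smooth_ext S u" and z: "\<And>y. y \<in> S \<Longrightarrow> y $ N = 0 \<Longrightarrow> jc S [] u y = 0"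
  shows "N \<notin> set ts \<Longrightarrow> y \<in> S \<Longrightarrow> y $ N = 0 \<Longrightarrow> jc S ts u y = 0"
proof (induction ts arbitrary: y)
  case (Cons i ts)
  have "jc S (i # ts) u y = jc S [i] (ipd ts u) y" using jc_append[of S "[i]" ts u] by simp
  also have "\<dots> = 0"
  proof (rule jc_tangential_vanishing[OF S_open reg smooth_ext_ipd[OF u] _ Cons.prems(2,3)])
    show "i \<noteq> N" using Cons.prems(1) by auto
    show "jc S [] (ipd ts u) y' = 0" if "y' \<in> S" "y' $ N = 0" for y'
      using Cons.IH[OF _ that] Cons.prems(1) jc_append[of S "[]" ts u] by simp
  qed
  finally show ?case .
qed (use z in simp)

text \<open>Derivatives commute, so the normal derivatives can be taken first; the remaining tangential
  derivatives of the difference then vanish on the boundary.\<close>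

lemma jets_agree_from_normal:
  assumes S_open: "openin (top_of_set (halfspace N)) S" and reg: "S \<subseteq> closure (interior S)"
    and u: "smooth_ext S u1" "smooth_ext S u2"
    and h: "\<And>k y. k \<le> m \<Longrightarrow> y \<in> S \<Longrightarrow> y $ N = 0 \<Longrightarrow> jc S (replicate k N) u1 y = jc S (replicate k N) u2 y"
  shows "jets_agree N S {y\<in>S. y $ N = 0} m u1 u2"
  unfolding jets_agree_def
proof (intro allI ballI impI)
  fix "is" y assume y: "y \<in> {y\<in>S. y $ N = 0}" and c: "count_list is N \<le> m"
  define k where "k = count_list is N"
  define ts where "ts = filter (\<lambda>a. a \<noteq> N) is"
  define w where "w = (\<lambda>z. ipd (replicate k N) u1 z - ipd (replicate k N) u2 z)"
  have cw: "smooth_ext S w" unfolding w_def by (intro smooth_ext_diff smooth_ext_ipd u)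
  have jc_w: "jc S ts' w y' = jc S (ts' @ replicate k N) u1 y' - jc S (ts' @ replicate k N) u2 y'"
    if "y' \<in> S" for ts' y'
    unfolding w_def jc_append by (rule jc_diff[OF reg that]) (intro smooth_ext_ipd u)+
  have "jc S ts w y = 0"
  proof (rule jc_tangentials_vanishing[OF S_open reg cw])
    show "jc S [] w y' = 0" if "y' \<in> S" "y' $ N = 0" for y'
      using jc_w[OF that(1), of "[]"] h[OF _ that] c unfolding k_def by simp
  qed (use y in \<open>auto simp: ts_def\<close>)
  then have "jc S (ts @ replicate k N) u1 y = jc S (ts @ replicate k N) u2 y"
    using jc_w[of y ts] y by simp
  moreover have "mset is = mset (ts @ replicate k N)"
    unfolding ts_def k_def by (rule mset_filter_replicate_count)
  ultimately show "jc S is u1 y = jc S is u2 y"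
    using jc_perm[OF u(1)] jc_perm[OF u(2)] by metis
qed

lemma
  assumes "invertible A"
  shows matrix_inv_right: "A ** matrix_inv A = mat 1" and matrix_inv_left: "matrix_inv A ** A = mat 1"
proof -
  have "\<exists>A'. A ** A' = mat 1 \<and> A' ** A = mat 1" using assms unfolding invertible_def .
  then have "A ** matrix_inv A = mat 1 \<and> matrix_inv A ** A = mat 1"
    unfolding matrix_inv_def by (rule someI_ex)
  then show "A ** matrix_inv A = mat 1" "matrix_inv A ** A = mat 1" by auto
qed

lemma matrix_inv_eqI:
  fixes A B :: "real^'n^'n"
  assumes "A ** B = mat 1"
  shows "matrix_inv A = B"
proof -
  have inv: "invertible A" using assms invertible_right_inverse by blast
  have "matrix_inv A = matrix_inv A ** (A ** B)" using assms by simp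
  also have "\<dots> = (matrix_inv A ** A) ** B" by (rule matrix_mul_assoc)
  also have "\<dots> = B" using matrix_inv_left[OF inv] by simp
  finally show ?thesis .
qed

lemma det_nonzero_posdef:
  fixes A :: "real^'n^'n"
  assumes "\<forall>v. v \<noteq> 0 \<longrightarrow> v \<bullet> (A *v v) > 0"
  shows "det A \<noteq> 0"
proof -
  have "\<forall>x. A *v x = 0 \<longrightarrow> x = 0" using assms by (metis inner_zero_right less_irrefl)
  then have "\<exists>B. B ** A = mat 1" by (simp add: matrix_left_invertible_ker)
  then show ?thesis using invertible_left_inverse invertible_det_nz by blast
qed

definition cramer_matrix :: "real^'n^'n \<Rightarrow> 'n \<Rightarrow> 'n \<Rightarrow> real^'n^'n" where
  "cramer_matrix A k l = (\<chi> a b. if b = k then (if a = l then 1 else 0) else A $ a $ b)"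

lemma matrix_inv_cramer:
  fixes A :: "real^'n^'n"
  assumes "det A \<noteq> 0"
  shows "matrix_inv A $ k $ l = det (cramer_matrix A k l) / det A"
proof -
  have "A *v (matrix_inv A *v axis l 1) = axis l 1"
    by (simp add: matrix_vector_mul_assoc matrix_inv_right[OF invertible_det_nz[THEN iffD2, OF assms]])
  then have "matrix_inv A *v axis l 1 = (\<chi> k. det (\<chi> i j. if j = k then axis l 1 $ i else A $ i $ j) / det A)"
    using cramer[OF assms] by blast
  moreover have "(matrix_inv A *v axis l 1) $ k = matrix_inv A $ k $ l"
    by (simp add: matrix_vector_mult_def axis_def if_distrib cong: if_cong)
  moreover have "(\<chi> i j. if j = k then axis l 1 $ i else A $ i $ j) = cramer_matrix A k l"
    by (simp add: cramer_matrix_def axis_def vec_eq_iff)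
  ultimately show ?thesis by simp
qed

lemma matrix_inv_unit_column:
  fixes A :: "real^'n^'n"
  assumes "det A \<noteq> 0" "A $ N $ N = 1" "\<And>i. i \<noteq> N \<Longrightarrow> A $ i $ N = 0"
  shows "matrix_inv A $ N $ N = 1"
proof -
  have "A *v axis N 1 = axis N 1"
    using assms(2,3) by (auto simp: vec_eq_iff matrix_vector_mult_def axis_def if_distrib cong: if_cong)
  then have "matrix_inv A *v axis N 1 = matrix_inv A *v (A *v axis N 1)" by simp
  also have "\<dots> = axis N 1"
    by (simp add: matrix_vector_mul_assoc matrix_inv_left[OF invertible_det_nz[THEN iffD2, OF assms(1)]])
  finally have "(matrix_inv A *v axis N 1) $ N = 1" by (simp add: axis_def)
  moreover have "(matrix_inv A *v axis N 1) $ N = matrix_inv A $ N $ N"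
    by (simp add: matrix_vector_mult_def axis_def if_distrib cong: if_cong)
  ultimately show ?thesis by simp
qed

lemma tendsto_det:
  fixes M :: "'b \<Rightarrow> real^'n^'n"
  assumes "\<And>a b. ((\<lambda>y. M y $ a $ b) \<longlongrightarrow> M0 $ a $ b) F"
  shows "((\<lambda>y. det (M y)) \<longlongrightarrow> det M0) F"
  unfolding det_def by (intro tendsto_sum tendsto_mult tendsto_const tendsto_prod assms)

lemma smooth_ext_det:
  assumes "\<And>a b. smooth_ext S (\<lambda>y. M y $ a $ b)"
  shows "smooth_ext S (\<lambda>y. det (M y))"
  unfolding det_def
  by (intro smooth_ext_sum smooth_ext_mult smooth_ext_const smooth_ext_prod assms finite_permutations) auto

lemma smooth_ext_matrix_inv:
  assumes "\<And>a b. smooth_ext S (\<lambda>y. M y $ a $ b)" "nonvanishing_ext S (\<lambda>y. det (M y))"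
  shows "smooth_ext S (\<lambda>y. matrix_inv (M y) $ k $ l)"
proof (rule smooth_ext_cong)
  show "det (cramer_matrix (M y) k l) / det (M y) = matrix_inv (M y) $ k $ l" if "y \<in> interior S" for y
    using matrix_inv_cramer assms(2) that unfolding nonvanishing_ext_def by metis
  show "smooth_ext S (\<lambda>y. det (cramer_matrix (M y) k l) / det (M y))"
  proof (intro smooth_ext_divide smooth_ext_det assms)
    show "smooth_ext S (\<lambda>y. cramer_matrix (M y) k l $ a $ b)" for a b
      unfolding cramer_matrix_def vec_lambda_beta by (cases "b = k") (simp_all add: smooth_ext_const assms)
  qed
qed

lemma nonvanishing_ext_det:
  assumes "\<And>x a b. x \<in> S \<Longrightarrow> ((\<lambda>y. M y $ a $ b) \<longlongrightarrow> M x $ a $ b) (at x within interior S)"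
    and "\<And>x. x \<in> S \<Longrightarrow> det (M x) \<noteq> 0"
  shows "nonvanishing_ext S (\<lambda>y. det (M y))"
  unfolding nonvanishing_ext_def using assms interior_subset by (blast intro: tendsto_det)

lemma riem_metric_det_nonzero: "riem_metric S H \<Longrightarrow> x \<in> S \<Longrightarrow> det (H x) \<noteq> 0"
  unfolding riem_metric_def by (intro det_nonzero_posdef) auto

lemma riem_metric_smooth_ext: "riem_metric S H \<Longrightarrow> smooth_ext S (\<lambda>x. H x $ i $ j)"
  unfolding riem_metric_def by (auto intro: smooth_upto_smooth_ext)

lemma nonvanishing_ext_riem_metric_det: "riem_metric S H \<Longrightarrow> nonvanishing_ext S (\<lambda>y. det (H y))"
  by (intro nonvanishing_ext_det riem_metric_det_nonzero smooth_upto_tendsto)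
     (auto simp: riem_metric_def)

lemma ginv_normal_entry: "riem_metric S H \<Longrightarrow> normal_form N S H \<Longrightarrow> x \<in> S \<Longrightarrow> ginv H x $ N $ N = 1"
  unfolding ginv_def normal_form_def by (intro matrix_inv_unit_column riem_metric_det_nonzero) auto

text \<open>The conformal Laplace equation solved for the second normal derivative \<open>\<partial>\<^sub>N \<partial>\<^sub>N f\<close>,
  which has coefficient \<open>g\<^sup>N\<^sup>N = 1\<close> for a metric in normal form: the right-hand side involves at most one
  normal derivative of \<open>f\<close>.\<close>

definition conf_lap_normal_rhs :: "'n::finite \<Rightarrow> (real^'n \<Rightarrow> real^'n^'n) \<Rightarrow> (real^'n \<Rightarrow> real) \<Rightarrow> real^'n \<Rightarrow> real"
  where "conf_lap_normal_rhs N H f y = (real CARD('n) - 2) / (4 * (real CARD('n) - 1)) * scal H y * f y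
    + (\<Sum>i\<in>UNIV. \<Sum>j\<in>UNIV. ginv H y $ i $ j * (\<Sum>k\<in>UNIV. chr H k i j y * pd k f y))
    - (\<Sum>i\<in>UNIV. \<Sum>j\<in>UNIV. if i = N \<and> j = N then 0 else ginv H y $ i $ j * pd i (pd j f) y)"

lemma sum_split_diagonal_entry:
  fixes a :: "'n::finite \<Rightarrow> 'n \<Rightarrow> real"
  shows "(\<Sum>i\<in>UNIV. \<Sum>j\<in>UNIV. a i j) = a N N + (\<Sum>i\<in>UNIV. \<Sum>j\<in>UNIV. if i = N \<and> j = N then 0 else a i j)"
proof -
  have "\<And>i. (\<Sum>j\<in>UNIV. a i j) = (\<Sum>j\<in>UNIV. if i = N \<and> j = N then a i j else 0)
      + (\<Sum>j\<in>UNIV. if i = N \<and> j = N then 0 else a i j)"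
    by (simp add: sum.distrib[symmetric] if_distrib cong: if_cong) (metis (full_types) add.right_neutral add_0)
  then have "(\<Sum>i\<in>UNIV. \<Sum>j\<in>UNIV. a i j) = (\<Sum>i\<in>UNIV. \<Sum>j\<in>UNIV. if i = N \<and> j = N then a i j else 0)
      + (\<Sum>i\<in>UNIV. \<Sum>j\<in>UNIV. if i = N \<and> j = N then 0 else a i j)"
    by (simp add: sum.distrib)
  moreover have "(\<Sum>j\<in>UNIV. if i = N \<and> j = N then a i j else 0) = (if i = N then a N N else 0)" for i
    by (auto simp: sum.delta)
  ultimately show ?thesis by (simp add: sum.delta)
qed

lemma conf_lap_solve_normal:
  assumes "conf_lap H f y = 0" "ginv H y $ N $ N = 1"
  shows "pd N (pd N f) y = conf_lap_normal_rhs N H f y"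
proof -
  have "lap H f y = (\<Sum>i\<in>UNIV. \<Sum>j\<in>UNIV. ginv H y $ i $ j * pd i (pd j f) y)
      - (\<Sum>i\<in>UNIV. \<Sum>j\<in>UNIV. ginv H y $ i $ j * (\<Sum>k\<in>UNIV. chr H k i j y * pd k f y))"
    unfolding lap_def by (simp add: right_diff_distrib sum_subtractf)
  moreover have "(\<Sum>i\<in>UNIV. \<Sum>j\<in>UNIV. ginv H y $ i $ j * pd i (pd j f) y)
     = pd N (pd N f) y + (\<Sum>i\<in>UNIV. \<Sum>j\<in>UNIV. if i = N \<and> j = N then 0 else ginv H y $ i $ j * pd i (pd j f) y)"
    using sum_split_diagonal_entry[of "\<lambda>i j. ginv H y $ i $ j * pd i (pd j f) y" N] assms(2) by simp
  ultimately show ?thesis using assms(1) unfolding conf_lap_def conf_lap_normal_rhs_def by simp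
qed

lemma MVT_unordered:
  fixes g :: "real \<Rightarrow> real"
  assumes "\<And>t. min a b \<le> t \<Longrightarrow> t \<le> max a b \<Longrightarrow> DERIV g t :> g' t"
  obtains \<theta> where "min a b \<le> \<theta>" "\<theta> \<le> max a b" "g b - g a = (b - a) * g' \<theta>"
proof (cases a b rule: linorder_cases)
  case less
  then obtain z where "a < z" "z < b" "g b - g a = (b - a) * g' z"
    using MVT2[OF less, of g g'] assms by auto
  then show ?thesis using less that[of z] by auto
next
  case greater
  then obtain z where "b < z" "z < a" "g a - g b = (a - b) * g' z"
    using MVT2[OF greater, of g g'] assms by auto
  then show ?thesis using greater that[of z] by (auto simp: algebra_simps)
qed (use that in auto)

lemma partial_increment_estimate:
  fixes f :: "real^'n \<Rightarrow> real"
  assumes "open U" "x \<in> U" "\<And>y. y \<in> U \<Longrightarrow> partial_differentiable f y k"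
    and "isCont (pd k f) x" "\<epsilon> > 0"
  obtains \<delta> where "\<delta> > 0"
    "\<And>w s. dist w x < \<delta> \<Longrightarrow> \<bar>s\<bar> < \<delta> \<Longrightarrow> \<bar>f (w + s *\<^sub>R axis k 1) - f w - s * pd k f x\<bar> \<le> \<epsilon> * \<bar>s\<bar>"
proof -
  obtain \<delta>1 where \<delta>1: "\<delta>1 > 0" "\<And>y. dist y x < \<delta>1 \<Longrightarrow> dist (pd k f y) (pd k f x) < \<epsilon>"
    using assms(4,5) unfolding continuous_at_eps_delta by blast
  obtain r where r: "r > 0" "ball x r \<subseteq> U" using assms(1,2) openE by blast
  define \<delta> where "\<delta> = min \<delta>1 r / 2"
  have near: "dist (w + t *\<^sub>R axis k 1) x < min \<delta>1 r" if "dist w x < \<delta>" "\<bar>t\<bar> \<le> \<bar>s\<bar>" "\<bar>s\<bar> < \<delta>" for w s t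
    using dist_triangle[of "w + t *\<^sub>R axis k 1" x w] that unfolding \<delta>_def by (simp add: dist_norm)
  show ?thesis
  proof (rule that)
    show "\<delta> > 0" using \<delta>1 r unfolding \<delta>_def by simp
    fix w s assume w: "dist w x < \<delta>" and s: "\<bar>s\<bar> < \<delta>"
    obtain \<theta> where \<theta>: "min 0 s \<le> \<theta>" "\<theta> \<le> max 0 s"
      "f (w + s *\<^sub>R axis k 1) - f (w + 0 *\<^sub>R axis k 1) = (s - 0) * pd k f (w + \<theta> *\<^sub>R axis k 1)"
    proof (rule MVT_unordered)
      fix t assume "min 0 s \<le> t" "t \<le> max 0 s"
      then have "w + t *\<^sub>R axis k 1 \<in> U" using near[OF w _ s, of t] r(2) by (auto simp: dist_commute)
      then show "DERIV (\<lambda>t. f (w + t *\<^sub>R axis k 1)) t :> pd k f (w + t *\<^sub>R axis k 1)"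
        by (intro line_has_real_derivative assms(3))
    qed
    have "\<bar>pd k f (w + \<theta> *\<^sub>R axis k 1) - pd k f x\<bar> < \<epsilon>"
      using \<delta>1(2) near[OF w _ s, of \<theta>] \<theta>(1,2) by (auto simp: dist_real_def)
    then have "\<bar>s\<bar> * \<bar>pd k f (w + \<theta> *\<^sub>R axis k 1) - pd k f x\<bar> \<le> \<bar>s\<bar> * \<epsilon>"
      by (intro mult_left_mono) auto
    moreover have "f (w + s *\<^sub>R axis k 1) - f w - s * pd k f x = s * (pd k f (w + \<theta> *\<^sub>R axis k 1) - pd k f x)"
      using \<theta>(3) by (simp add: algebra_simps)
    ultimately show "\<bar>f (w + s *\<^sub>R axis k 1) - f w - s * pd k f x\<bar> \<le> \<epsilon> * \<bar>s\<bar>"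
      by (simp add: abs_mult mult.commute)
  qed
qed

definition coord_proj :: "'n set \<Rightarrow> real^'n \<Rightarrow> real^'n" where
  "coord_proj K v = (\<chi> i. if i \<in> K then v $ i else 0)"

text \<open>Continuous partial derivatives give a Frechet derivative: move from \<open>x\<close> to \<open>x + v\<close> one
  coordinate at a time, i.e.\ induct on the set \<open>K\<close> of coordinates of \<open>v\<close> already used.\<close>

lemma partial_linearization:
  fixes f :: "real^'n::finite \<Rightarrow> real"
  assumes U: "open U" "x \<in> U"
    and l: "\<And>y k. y \<in> U \<Longrightarrow> partial_differentiable f y k" and c: "\<And>k. isCont (pd k f) x"
  shows "finite K \<Longrightarrow> \<epsilon> > 0 \<Longrightarrow> \<exists>\<delta>>0. \<forall>v. norm v < \<delta> \<longrightarrow>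
      \<bar>f (x + coord_proj K v) - f x - (\<Sum>k\<in>K. v $ k * pd k f x)\<bar> \<le> \<epsilon> * norm v"
proof (induction K arbitrary: \<epsilon> rule: finite_induct)
  case empty
  have "coord_proj {} v = 0" for v :: "real^'n" by (simp add: coord_proj_def vec_eq_iff)
  then show ?case using empty.prems by (auto intro!: exI[of _ 1])
next
  case (insert k K)
  obtain \<delta>1 where \<delta>1: "\<delta>1 > 0" "\<And>v. norm v < \<delta>1 \<Longrightarrow>
      \<bar>f (x + coord_proj K v) - f x - (\<Sum>k\<in>K. v $ k * pd k f x)\<bar> \<le> (\<epsilon>/2) * norm v"
    using insert.IH[of "\<epsilon>/2"] insert.prems by auto
  obtain \<delta>2 where \<delta>2: "\<delta>2 > 0" "\<And>w s. dist w x < \<delta>2 \<Longrightarrow> \<bar>s\<bar> < \<delta>2 \<Longrightarrow>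
      \<bar>f (w + s *\<^sub>R axis k 1) - f w - s * pd k f x\<bar> \<le> (\<epsilon>/2) * \<bar>s\<bar>"
    using partial_increment_estimate[OF U l c, of "\<epsilon>/2"] insert.prems by auto
  show ?case
  proof (intro exI[of _ "min \<delta>1 \<delta>2"] conjI allI impI)
    fix v :: "real^'n" assume v: "norm v < min \<delta>1 \<delta>2"
    define w where "w = x + coord_proj K v"
    have "dist w x \<le> norm v" unfolding w_def coord_proj_def dist_norm
      by (simp add: norm_le_componentwise_cart)
    moreover have vk: "\<bar>v $ k\<bar> \<le> norm v" by (rule component_le_norm_cart)
    ultimately have "\<bar>f (w + v $ k *\<^sub>R axis k 1) - f w - v $ k * pd k f x\<bar> \<le> (\<epsilon>/2) * \<bar>v $ k\<bar>"
      using \<delta>2(2)[of w "v $ k"] v by simp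
    also have "\<dots> \<le> (\<epsilon>/2) * norm v" using vk insert.prems by simp
    finally have A: "\<bar>f (w + v $ k *\<^sub>R axis k 1) - f w - v $ k * pd k f x\<bar> \<le> (\<epsilon>/2) * norm v" .
    have B: "\<bar>f w - f x - (\<Sum>k\<in>K. v $ k * pd k f x)\<bar> \<le> (\<epsilon>/2) * norm v"
      unfolding w_def using \<delta>1(2) v by simp
    have "x + coord_proj (insert k K) v = w + v $ k *\<^sub>R axis k 1"
      using insert(2) unfolding w_def coord_proj_def by (auto simp: vec_eq_iff axis_def)
    then have "f (x + coord_proj (insert k K) v) - f x - (\<Sum>k\<in>insert k K. v $ k * pd k f x)
        = (f (w + v $ k *\<^sub>R axis k 1) - f w - v $ k * pd k f x) + (f w - f x - (\<Sum>k\<in>K. v $ k * pd k f x))"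
      using insert(1,2) by simp
    then show "\<bar>f (x + coord_proj (insert k K) v) - f x - (\<Sum>k\<in>insert k K. v $ k * pd k f x)\<bar> \<le> \<epsilon> * norm v"
      using abs_triangle_ineq[of "f (w + v $ k *\<^sub>R axis k 1) - f w - v $ k * pd k f x"
          "f w - f x - (\<Sum>k\<in>K. v $ k * pd k f x)"] A B by linarith
  qed (use \<delta>1 \<delta>2 in simp)
qed

lemma has_derivative_continuous_partials:
  fixes f :: "real^'n::finite \<Rightarrow> real"
  assumes U: "open U" "x \<in> U"
    and l: "\<And>y k. y \<in> U \<Longrightarrow> partial_differentiable f y k" and c: "\<And>k. isCont (pd k f) x"
  shows "(f has_derivative (\<lambda>v. \<Sum>k\<in>UNIV. v $ k * pd k f x)) (at x)"
  unfolding has_derivative_at'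
proof (intro conjI allI impI)
  show "bounded_linear (\<lambda>v. \<Sum>k\<in>UNIV. v $ k * pd k f x)"
    by (intro bounded_linear_sum bounded_linear_compose[OF bounded_linear_mult_left bounded_linear_vec_nth])
  fix e :: real assume e: "e > 0"
  obtain d where d: "d > 0" "\<And>v. norm v < d \<Longrightarrow>
      \<bar>f (x + coord_proj UNIV v) - f x - (\<Sum>k\<in>UNIV. v $ k * pd k f x)\<bar> \<le> (e/2) * norm v"
    using partial_linearization[OF U l c, of UNIV "e/2"] e by auto
  show "\<exists>d>0. \<forall>x'. 0 < norm (x' - x) \<and> norm (x' - x) < d \<longrightarrow>
        norm (f x' - f x - (\<Sum>k\<in>UNIV. (x' - x) $ k * pd k f x)) / norm (x' - x) < e"
  proof (intro exI[of _ d] conjI allI impI d(1))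
    fix x' :: "real^'n" assume h: "0 < norm (x' - x) \<and> norm (x' - x) < d"
    have "coord_proj UNIV (x' - x) = x' - x" unfolding coord_proj_def by (simp add: vec_eq_iff)
    then have "\<bar>f x' - f x - (\<Sum>k\<in>UNIV. (x' - x) $ k * pd k f x)\<bar> \<le> (e/2) * norm (x' - x)"
      using d(2)[of "x' - x"] h by simp
    also have "\<dots> < e * norm (x' - x)" using h e by simp
    finally show "norm (f x' - f x - (\<Sum>k\<in>UNIV. (x' - x) $ k * pd k f x)) / norm (x' - x) < e"
      using h by (simp add: divide_less_eq)
  qed
qed

lemma smooth_ext_has_derivative:
  assumes "smooth_ext S f" "x \<in> interior S"
  shows "(f has_derivative (\<lambda>v. \<Sum>k\<in>UNIV. v $ k * pd k f x)) (at x)"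
proof (rule has_derivative_continuous_partials[OF open_interior assms(2)])
  show "partial_differentiable f y k" if "y \<in> interior S" for y k
    using smooth_ext_partial_differentiable[OF assms(1) that, of "[]"] by simp
  show "isCont (pd k f) x" for k
    using smooth_ext_continuous_on[OF assms(1), of "[k]"] assms(2)
    by (simp add: continuous_on_eq_continuous_at)
qed

lemma has_vector_derivative_componentwise:
  fixes \<gamma> :: "real \<Rightarrow> real^'n::finite"
  assumes "\<And>i. ((\<lambda>t. \<gamma> t $ i) has_vector_derivative d $ i) (at t0)"
  shows "(\<gamma> has_vector_derivative d) (at t0)"
  unfolding has_vector_derivative_def
proof (subst has_derivative_componentwise_within, intro ballI)
  fix b :: "real^'n" assume "b \<in> Basis"
  then obtain i where i: "b = axis i 1" unfolding Basis_vec_def by auto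
  have "((\<lambda>t. \<gamma> t $ i) has_derivative (\<lambda>t. t *\<^sub>R d $ i)) (at t0 within UNIV)"
    using assms[of i] unfolding has_vector_derivative_def by simp
  then show "((\<lambda>x. \<gamma> x \<bullet> b) has_derivative (\<lambda>x. x *\<^sub>R d \<bullet> b)) (at t0 within UNIV)"
    unfolding i by (simp add: inner_axis)
qed

lemma pd_compose:
  fixes \<phi> :: "real^'n::finite \<Rightarrow> real^'n" and u :: "real^'n \<Rightarrow> real"
  assumes l: "\<And>k. partial_differentiable (\<lambda>y. \<phi> y $ k) y0 a"
    and du: "(u has_derivative (\<lambda>v. \<Sum>k\<in>UNIV. v $ k * c k)) (at (\<phi> y0))"
  shows "pd a (\<lambda>y. u (\<phi> y)) y0 = (\<Sum>k\<in>UNIV. pd a (\<lambda>y. \<phi> y $ k) y0 * c k)"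
proof -
  define d where "d = (\<chi> k. pd a (\<lambda>y. \<phi> y $ k) y0)"
  have "((\<lambda>t. \<phi> (y0 + t *\<^sub>R axis a 1)) has_vector_derivative d) (at 0)"
    by (rule has_vector_derivative_componentwise) (use pd_has_vector_derivative[OF l] in \<open>simp add: d_def\<close>)
  moreover have "(u has_derivative (\<lambda>v. \<Sum>k\<in>UNIV. v $ k * c k)) (at ((\<lambda>t. \<phi> (y0 + t *\<^sub>R axis a 1)) 0))"
    using du by simp
  ultimately have "((\<lambda>t. u (\<phi> (y0 + t *\<^sub>R axis a 1))) has_derivative (\<lambda>t. \<Sum>k\<in>UNIV. (t *\<^sub>R d) $ k * c k)) (at 0)"
    unfolding has_vector_derivative_def by (rule has_derivative_compose)
  moreover have "(\<lambda>t. \<Sum>k\<in>UNIV. (t *\<^sub>R d) $ k * c k) = (\<lambda>t. t *\<^sub>R (\<Sum>k\<in>UNIV. d $ k * c k))"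
    by (rule ext) (simp add: sum_distrib_left mult.assoc)
  ultimately have h: "((\<lambda>t. u (\<phi> (y0 + t *\<^sub>R axis a 1))) has_vector_derivative (\<Sum>k\<in>UNIV. d $ k * c k)) (at 0)"
    unfolding has_vector_derivative_def by simp
  show "pd a (\<lambda>y. u (\<phi> y)) y0 = (\<Sum>k\<in>UNIV. pd a (\<lambda>y. \<phi> y $ k) y0 * c k)"
    using pd_eqI[OF h] by (simp add: d_def)
qed

lemma pd_component: "pd a (\<lambda>y. y $ l) y = (if a = l then 1 else 0)"
proof -
  have "(\<lambda>t. (y + t *\<^sub>R axis a 1) $ l) = (\<lambda>t. y $ l + t * (if a = l then 1 else 0))"
    by (rule ext) (simp add: axis_def)
  then have h: "((\<lambda>t. (y + t *\<^sub>R axis a 1) $ l) has_vector_derivative (if a = l then 1 else 0)) (at 0)"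
    unfolding has_real_derivative_iff_has_vector_derivative[symmetric] by (auto intro!: derivative_eq_intros)
  then show ?thesis by (rule pd_eqI)
qed

locale halfspace_domain =
  fixes N :: "'n::finite" and S :: "(real^'n) set"
  assumes S_open: "openin (top_of_set (halfspace N)) S"
    and reg: "S \<subseteq> closure (interior S)"
begin

definition bdry :: "(real^'n) set" where "bdry = {x\<in>S. x $ N = 0}"

lemma bdry_subset: "bdry \<subseteq> S"
  unfolding bdry_def by auto

lemma interior_normal_pos:
  assumes "x \<in> interior S" shows "x $ N > 0"
proof -
  obtain e where e: "e > 0" "ball x e \<subseteq> S" using assms by (meson mem_interior)
  have "x - (e/2) *\<^sub>R axis N 1 \<in> ball x e" using e by (simp add: dist_norm)
  moreover have "S \<subseteq> halfspace N" using openin_subset[OF S_open] by simp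
  ultimately have "x - (e/2) *\<^sub>R axis N 1 \<in> halfspace N" using e by blast
  then show ?thesis using e unfolding halfspace_def by (simp add: axis_def)
qed

definition jet_equiv_upto :: "nat \<Rightarrow> (real^'n \<Rightarrow> real) \<Rightarrow> (real^'n \<Rightarrow> real) \<Rightarrow> bool" where
  "jet_equiv_upto m f1 f2 \<longleftrightarrow> smooth_ext S f1 \<and> smooth_ext S f2 \<and> jets_agree N S bdry m f1 f2"

text \<open>For smooth functions, \<open>jet_equiv f\<^sub>1 f\<^sub>2\<close> is \<open>f\<^sub>1 = f\<^sub>2 + O((x\<^sup>n)\<^sup>\<infinity>)\<close> on \<open>\<Gamma>\<close>
  (\<open>jet_equiv_if_flat\<close>, \<open>flat_bdry_if_jet_equiv\<close>).\<close>

definition jet_equiv :: "(real^'n \<Rightarrow> real) \<Rightarrow> (real^'n \<Rightarrow> real) \<Rightarrow> bool" where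
  "jet_equiv f1 f2 \<longleftrightarrow> (\<forall>m. jet_equiv_upto m f1 f2)"

lemma jet_equiv_upto_add:
  "jet_equiv_upto m f1 f2 \<Longrightarrow> jet_equiv_upto m g1 g2 \<Longrightarrow> jet_equiv_upto m (\<lambda>y. f1 y + g1 y) (\<lambda>y. f2 y + g2 y)"
  unfolding jet_equiv_upto_def by (auto intro!: smooth_ext_add jets_agree_add[OF reg bdry_subset])

lemma jet_equiv_upto_diff:
  "jet_equiv_upto m f1 f2 \<Longrightarrow> jet_equiv_upto m g1 g2 \<Longrightarrow> jet_equiv_upto m (\<lambda>y. f1 y - g1 y) (\<lambda>y. f2 y - g2 y)"
  unfolding jet_equiv_upto_def by (auto intro!: smooth_ext_diff jets_agree_diff[OF reg bdry_subset])

lemma jet_equiv_upto_mult: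
  "jet_equiv_upto m f1 f2 \<Longrightarrow> jet_equiv_upto m g1 g2 \<Longrightarrow> jet_equiv_upto m (\<lambda>y. f1 y * g1 y) (\<lambda>y. f2 y * g2 y)"
  unfolding jet_equiv_upto_def by (auto intro!: smooth_ext_mult jets_agree_mult[OF reg bdry_subset])

lemma jet_equiv_upto_divide:
  "jet_equiv_upto m f1 f2 \<Longrightarrow> jet_equiv_upto m g1 g2 \<Longrightarrow> nonvanishing_ext S g1 \<Longrightarrow> nonvanishing_ext S g2 \<Longrightarrow>
    jet_equiv_upto m (\<lambda>y. f1 y / g1 y) (\<lambda>y. f2 y / g2 y)"
  unfolding jet_equiv_upto_def by (auto intro!: smooth_ext_divide jets_agree_divide[OF reg bdry_subset])

lemma jet_equiv_upto_const: "jet_equiv_upto m (\<lambda>y. c) (\<lambda>y. c)"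
  unfolding jet_equiv_upto_def by (auto intro!: smooth_ext_const jets_agree_refl)

lemma jet_equiv_upto_sum:
  "finite A \<Longrightarrow> (\<And>a. a \<in> A \<Longrightarrow> jet_equiv_upto m (f1 a) (f2 a)) \<Longrightarrow>
    jet_equiv_upto m (\<lambda>y. \<Sum>a\<in>A. f1 a y) (\<lambda>y. \<Sum>a\<in>A. f2 a y)"
  unfolding jet_equiv_upto_def by (auto intro!: smooth_ext_sum jets_agree_sum[OF reg bdry_subset])

lemma jet_equiv_upto_prod:
  "finite A \<Longrightarrow> (\<And>a. a \<in> A \<Longrightarrow> jet_equiv_upto m (f1 a) (f2 a)) \<Longrightarrow>
    jet_equiv_upto m (\<lambda>y. \<Prod>a\<in>A. f1 a y) (\<lambda>y. \<Prod>a\<in>A. f2 a y)"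
  unfolding jet_equiv_upto_def by (auto intro!: smooth_ext_prod jets_agree_prod[OF reg bdry_subset])

lemma jet_equiv_upto_if:
  "(c \<Longrightarrow> jet_equiv_upto m f1 f2) \<Longrightarrow> (\<not> c \<Longrightarrow> jet_equiv_upto m g1 g2) \<Longrightarrow>
    jet_equiv_upto m (\<lambda>y. if c then f1 y else g1 y) (\<lambda>y. if c then f2 y else g2 y)"
  by (cases c) simp_all

lemma jet_equiv_upto_mono: "jet_equiv_upto m f1 f2 \<Longrightarrow> m' \<le> m \<Longrightarrow> jet_equiv_upto m' f1 f2"
  unfolding jet_equiv_upto_def using jets_agree_mono by blast

lemma jet_equiv_upto_pd: "jet_equiv_upto (Suc m) f1 f2 \<Longrightarrow> jet_equiv_upto m (pd k f1) (pd k f2)"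
  unfolding jet_equiv_upto_def by (auto intro!: smooth_ext_pd jets_agree_pd)

lemma jet_equiv_upto_pd_pd:
  assumes "\<not> (i = N \<and> j = N)" "jet_equiv_upto (Suc m) f1 f2"
  shows "jet_equiv_upto m (pd i (pd j f1)) (pd i (pd j f2))"
proof -
  have a: "jets_agree N S bdry (Suc m) f1 f2" using assms(2) unfolding jet_equiv_upto_def by auto
  define m1 where "m1 = (if j = N then m else Suc m)"
  have "jets_agree N S bdry m1 (pd j f1) (pd j f2)" by (rule jets_agree_pd[OF a]) (simp add: m1_def)
  then have "jets_agree N S bdry m (pd i (pd j f1)) (pd i (pd j f2))"
    by (rule jets_agree_pd) (use assms(1) in \<open>auto simp: m1_def\<close>)
  then show ?thesis using assms(2) unfolding jet_equiv_upto_def by (auto intro!: smooth_ext_pd)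
qed

lemma jet_equiv_upto_cong:
  assumes "jet_equiv_upto m g1 g2" "\<And>y. y \<in> interior S \<Longrightarrow> f1 y = g1 y" "\<And>y. y \<in> interior S \<Longrightarrow> f2 y = g2 y"
  shows "jet_equiv_upto m f1 f2"
  using assms jc_cong[of S f1 g1] jc_cong[of S f2 g2]
  unfolding jet_equiv_upto_def jets_agree_def by (auto intro: smooth_ext_cong)

lemma jet_equiv_upto_if_jet_equiv: "jet_equiv f1 f2 \<Longrightarrow> jet_equiv_upto m f1 f2"
  unfolding jet_equiv_def by blast

lemma jet_equiv_pd: "jet_equiv f1 f2 \<Longrightarrow> jet_equiv (pd i f1) (pd i f2)"
  unfolding jet_equiv_def using jet_equiv_upto_pd by blast

lemma jet_equiv_of_upto: "(\<And>m. jet_equiv_upto m f1 f2) \<Longrightarrow> jet_equiv f1 f2"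
  unfolding jet_equiv_def by blast

lemma jet_equiv_cong:
  "jet_equiv g1 g2 \<Longrightarrow> (\<And>y. y \<in> interior S \<Longrightarrow> f1 y = g1 y) \<Longrightarrow> (\<And>y. y \<in> interior S \<Longrightarrow> f2 y = g2 y) \<Longrightarrow>
    jet_equiv f1 f2"
  unfolding jet_equiv_def by (blast intro: jet_equiv_upto_cong)

lemma jet_equiv_upto_det:
  "(\<And>a b. jet_equiv_upto m (\<lambda>y. M1 y $ a $ b) (\<lambda>y. M2 y $ a $ b)) \<Longrightarrow>
    jet_equiv_upto m (\<lambda>y. det (M1 y)) (\<lambda>y. det (M2 y))"
  unfolding det_def
  by (intro jet_equiv_upto_sum jet_equiv_upto_mult jet_equiv_upto_const jet_equiv_upto_prod
      finite_permutations finite_UNIV) auto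

lemma jet_equiv_det:
  "(\<And>a b. jet_equiv (\<lambda>y. M1 y $ a $ b) (\<lambda>y. M2 y $ a $ b)) \<Longrightarrow> jet_equiv (\<lambda>y. det (M1 y)) (\<lambda>y. det (M2 y))"
  unfolding jet_equiv_def by (blast intro: jet_equiv_upto_det)

lemma jet_equiv_divide:
  "jet_equiv f1 f2 \<Longrightarrow> jet_equiv g1 g2 \<Longrightarrow> nonvanishing_ext S g1 \<Longrightarrow> nonvanishing_ext S g2 \<Longrightarrow>
    jet_equiv (\<lambda>y. f1 y / g1 y) (\<lambda>y. f2 y / g2 y)"
  unfolding jet_equiv_def by (blast intro: jet_equiv_upto_divide)

lemma jet_equiv_matrix_inv:
  assumes "\<And>a b. jet_equiv (\<lambda>y. M1 y $ a $ b) (\<lambda>y. M2 y $ a $ b)"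
    and "nonvanishing_ext S (\<lambda>y. det (M1 y))" "nonvanishing_ext S (\<lambda>y. det (M2 y))"
  shows "jet_equiv (\<lambda>y. matrix_inv (M1 y) $ k $ l) (\<lambda>y. matrix_inv (M2 y) $ k $ l)"
proof (rule jet_equiv_cong)
  have inv: "matrix_inv (M y) $ k $ l = det (cramer_matrix (M y) k l) / det (M y)"
    if "nonvanishing_ext S (\<lambda>y. det (M y))" "y \<in> interior S" for M y
    using matrix_inv_cramer that unfolding nonvanishing_ext_def by blast
  show "matrix_inv (M1 y) $ k $ l = det (cramer_matrix (M1 y) k l) / det (M1 y)"
    "matrix_inv (M2 y) $ k $ l = det (cramer_matrix (M2 y) k l) / det (M2 y)" if "y \<in> interior S" for y
    using inv assms(2,3) that by blast+
  have "jet_equiv (\<lambda>y. cramer_matrix (M1 y) k l $ a $ b) (\<lambda>y. cramer_matrix (M2 y) k l $ a $ b)" for a b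
    unfolding cramer_matrix_def vec_lambda_beta jet_equiv_def
    by (intro allI jet_equiv_upto_if jet_equiv_upto_const jet_equiv_upto_if_jet_equiv assms(1))
  then show "jet_equiv (\<lambda>y. det (cramer_matrix (M1 y) k l) / det (M1 y))
      (\<lambda>y. det (cramer_matrix (M2 y) k l) / det (M2 y))"
    by (intro jet_equiv_divide jet_equiv_det assms)
qed

lemma jet_equiv_if_flat:
  assumes "smooth_ext S u1" "smooth_ext S u2" "flat_bdry N S (\<lambda>y. u1 y - u2 y)"
  shows "jet_equiv u1 u2"
  unfolding jet_equiv_def jet_equiv_upto_def bdry_def
proof (intro allI conjI assms(1,2) jets_agree_from_normal[OF S_open reg assms(1,2)])
  fix k y assume "y \<in> S" "y $ N = 0"
  then show "jc S (replicate k N) u1 y = jc S (replicate k N) u2 y"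
    using assms(3) jc_diff[OF reg _ assms(1,2), of y "replicate k N"] unfolding flat_bdry_def by simp
qed

lemma count_list_replicate: "count_list (replicate k x) x = k"
  by (induction k) auto

lemma flat_bdry_if_jet_equiv:
  assumes "jet_equiv f1 f2"
  shows "flat_bdry N S (\<lambda>x. f1 x - f2 x)"
  unfolding flat_bdry_def
proof (intro allI ballI impI)
  fix k x assume x: "x \<in> S" "x $ N = 0"
  have c: "smooth_ext S f1" "smooth_ext S f2" and a: "jets_agree N S bdry k f1 f2"
    using assms unfolding jet_equiv_def jet_equiv_upto_def by auto
  have "jc S (replicate k N) f1 x = jc S (replicate k N) f2 x"
    by (rule jets_agreeD[OF a]) (use x in \<open>auto simp: bdry_def count_list_replicate\<close>)
  then show "jc S (replicate k N) (\<lambda>x. f1 x - f2 x) x = 0"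
    using jc_diff[OF reg x(1) c] by simp
qed

lemma jet_equiv_metric:
  assumes "riem_metric S H1" "riem_metric S H2" "\<forall>i j. flat_bdry N S (\<lambda>x. H1 x $ i $ j - H2 x $ i $ j)"
  shows "jet_equiv (\<lambda>y. H1 y $ i $ j) (\<lambda>y. H2 y $ i $ j)"
  using assms by (intro jet_equiv_if_flat riem_metric_smooth_ext) auto

lemma jc_normal_normal_conf_lap:
  assumes H: "riem_metric S H" "normal_form N S H" and eq: "\<forall>x\<in>S. x $ N > 0 \<longrightarrow> conf_lap H F x = 0"
  shows "jc S (replicate m N @ [N, N]) F = jc S (replicate m N) (conf_lap_normal_rhs N H F)"
  unfolding jc_append
proof (intro ext jc_cong)
  fix y assume y: "y \<in> interior S"
  then have "y \<in> S" using interior_subset by blast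
  then show "ipd [N, N] F y = conf_lap_normal_rhs N H F y"
    using conf_lap_solve_normal[of H F y N] eq interior_normal_pos[OF y] ginv_normal_entry[OF H] by simp
qed

context
  fixes H1 H2 :: "real^'n \<Rightarrow> real^'n^'n"
  assumes H1: "riem_metric S H1" and H2: "riem_metric S H2"
    and H: "\<And>a b. jet_equiv (\<lambda>y. H1 y $ a $ b) (\<lambda>y. H2 y $ a $ b)"
begin

lemma jet_equiv_ginv: "jet_equiv (\<lambda>y. ginv H1 y $ k $ l) (\<lambda>y. ginv H2 y $ k $ l)"
  unfolding ginv_def by (intro jet_equiv_matrix_inv H nonvanishing_ext_riem_metric_det H1 H2)

lemma jet_equiv_chr: "jet_equiv (chr H1 k i j) (chr H2 k i j)"
  unfolding chr_def[abs_def] jet_equiv_def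
  by (intro allI jet_equiv_upto_mult jet_equiv_upto_const jet_equiv_upto_sum jet_equiv_upto_add
      jet_equiv_upto_diff jet_equiv_upto_if_jet_equiv jet_equiv_pd jet_equiv_ginv H finite_UNIV) simp_all

lemma jet_equiv_ricci: "jet_equiv (ricci H1 i j) (ricci H2 i j)"
  unfolding ricci_def[abs_def] jet_equiv_def
  by (intro allI jet_equiv_upto_mult jet_equiv_upto_sum jet_equiv_upto_add jet_equiv_upto_diff
      jet_equiv_upto_if_jet_equiv jet_equiv_pd jet_equiv_chr finite_UNIV) simp_all

lemma jet_equiv_scal: "jet_equiv (scal H1) (scal H2)"
  unfolding scal_def[abs_def] jet_equiv_def
  by (intro allI jet_equiv_upto_mult jet_equiv_upto_sum jet_equiv_upto_if_jet_equiv
      jet_equiv_ricci jet_equiv_ginv finite_UNIV) simp_all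

lemma jet_equiv_upto_normal_rhs:
  assumes f: "jet_equiv_upto (Suc m) f1 f2"
  shows "jet_equiv_upto m (conf_lap_normal_rhs N H1 f1) (conf_lap_normal_rhs N H2 f2)"
proof -
  have "jet_equiv_upto m f1 f2" by (rule jet_equiv_upto_mono[OF f]) simp
  moreover note jet_equiv_upto_pd[OF f] jet_equiv_upto_pd_pd[OF _ f]
  moreover note jet_equiv_upto_if_jet_equiv[OF jet_equiv_ginv] jet_equiv_upto_if_jet_equiv[OF jet_equiv_chr]
    jet_equiv_upto_if_jet_equiv[OF jet_equiv_scal]
  ultimately show ?thesis unfolding conf_lap_normal_rhs_def[abs_def]
    by (intro jet_equiv_upto_diff jet_equiv_upto_add jet_equiv_upto_mult jet_equiv_upto_const
        jet_equiv_upto_sum jet_equiv_upto_if finite_UNIV; simp)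
qed

lemma conf_lap_step:
  assumes nf1: "normal_form N S H1" and nf2: "normal_form N S H2"
    and F: "smooth_ext S F1" "smooth_ext S F2"
    and eq1: "\<forall>x\<in>S. x $ N > 0 \<longrightarrow> conf_lap H1 F1 x = 0"
    and eq2: "\<forall>x\<in>S. x $ N > 0 \<longrightarrow> conf_lap H2 F2 x = 0"
    and IH: "jet_equiv_upto (Suc m) F1 F2"
  shows "jet_equiv_upto (Suc (Suc m)) F1 F2"
  unfolding jet_equiv_upto_def bdry_def
proof (intro conjI F jets_agree_from_normal[OF S_open reg F])
  fix k y assume k: "k \<le> Suc (Suc m)" and "y \<in> S" "y $ N = 0"
  then have y: "y \<in> bdry" unfolding bdry_def by simp
  show "jc S (replicate k N) F1 y = jc S (replicate k N) F2 y"
  proof (cases "k = Suc (Suc m)")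
    case True
    then have "replicate k N = replicate m N @ [N, N]" by (simp add: replicate_append_same[symmetric])
    moreover have "jets_agree N S bdry m (conf_lap_normal_rhs N H1 F1) (conf_lap_normal_rhs N H2 F2)"
      using jet_equiv_upto_normal_rhs[OF IH] unfolding jet_equiv_upto_def by blast
    ultimately show ?thesis
      using jets_agreeD[OF _ y] jc_normal_normal_conf_lap[OF H1 nf1 eq1] jc_normal_normal_conf_lap[OF H2 nf2 eq2]
      by (simp add: count_list_replicate)
  next
    case False
    have "jets_agree N S bdry (Suc m) F1 F2" using IH unfolding jet_equiv_upto_def by blast
    then show ?thesis using jets_agreeD[OF _ y] k False by (simp add: count_list_replicate)
  qed
qed

lemma conf_lap_cauchy_jet_equiv:
  assumes "normal_form N S H1" "normal_form N S H2"
    and F1: "smooth_upto S F1" and F2: "smooth_upto S F2"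
    and "\<forall>x\<in>S. x $ N > 0 \<longrightarrow> conf_lap H1 F1 x = 0" "\<forall>x\<in>S. x $ N > 0 \<longrightarrow> conf_lap H2 F2 x = 0"
    and cauchy: "\<forall>x\<in>S. x $ N = 0 \<longrightarrow> F1 x = F2 x \<and> jc S [N] F1 x = jc S [N] F2 x"
  shows "jet_equiv F1 F2"
proof -
  have F: "smooth_ext S F1" "smooth_ext S F2" using F1 F2 by (auto intro: smooth_upto_smooth_ext)
  have "jet_equiv_upto (Suc m) F1 F2" for m
  proof (induction m)
    case 0
    show ?case unfolding jet_equiv_upto_def bdry_def
    proof (intro conjI F jets_agree_from_normal[OF S_open reg F])
      fix k y assume "k \<le> Suc 0" "y \<in> S" "y $ N = 0"
      then show "jc S (replicate k N) F1 y = jc S (replicate k N) F2 y"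
        using jc_Nil_smooth_upto[OF F1] jc_Nil_smooth_upto[OF F2] cauchy by (cases k) auto
    qed
  qed (rule conf_lap_step[OF assms(1,2) F assms(5,6)])
  then show ?thesis by (blast intro: jet_equiv_of_upto jet_equiv_upto_mono[OF _ le_SucI])
qed

end

end
text \<open>\<open>chart_ipd M is u\<close> is the iterated derivative \<open>ipd is\<close> of \<open>u \<circ> Z\<inverse>\<close> in the chart coordinates,
  written as a function on the original domain via the chain rule, with \<open>M\<close> the inverse Jacobian of \<open>Z\<close>.\<close>

primrec chart_ipd :: "(real^'n \<Rightarrow> real^'n^'n) \<Rightarrow> 'n list \<Rightarrow> (real^'n \<Rightarrow> real) \<Rightarrow> real^'n \<Rightarrow> real" where
  "chart_ipd M [] u = u"
| "chart_ipd M (a # is) u = (\<lambda>x. \<Sum>k\<in>UNIV. pd k (chart_ipd M is u) x * M x $ k $ a)"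

definition pushed_coeff :: "(real^'n \<Rightarrow> real^'n^'n) \<Rightarrow> (real^'n \<Rightarrow> real^'n^'n) \<Rightarrow> 'n \<Rightarrow> 'n \<Rightarrow> real^'n \<Rightarrow> real" where
  "pushed_coeff M H a b x = (\<Sum>i\<in>UNIV. \<Sum>j\<in>UNIV. M x $ i $ a * M x $ j $ b * H x $ i $ j)"

locale coord_chart = halfspace_domain N S for N :: "'n::finite" and S +
  fixes Z :: "real^'n \<Rightarrow> real^'n"
  assumes coord: "coord_system S Z"
begin

definition img :: "(real^'n) set" where "img = Z ` S"
definition Zinv :: "real^'n \<Rightarrow> real^'n" where "Zinv = inv_into S Z"
definition jac :: "real^'n \<Rightarrow> real^'n^'n" where "jac x = (\<chi> l k. jc S [k] (\<lambda>x. Z x $ l) x)"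
definition jac_inv :: "real^'n \<Rightarrow> real^'n^'n" where "jac_inv x = matrix_inv (jac x)"

lemma smooth_upto_Z: "smooth_upto S (\<lambda>x. Z x $ l)"
  using coord unfolding coord_system_def by blast

lemma smooth_ext_Z: "smooth_ext S (\<lambda>x. Z x $ l)"
  using smooth_upto_smooth_ext[OF smooth_upto_Z] .

lemma smooth_upto_Zinv: "smooth_upto img (\<lambda>y. Zinv y $ l)"
  using coord unfolding coord_system_def img_def Zinv_def by blast

lemma smooth_ext_Zinv: "smooth_ext img (\<lambda>y. Zinv y $ l)"
  using smooth_upto_smooth_ext[OF smooth_upto_Zinv] .

lemma Zinv_Z: "x \<in> S \<Longrightarrow> Zinv (Z x) = x"
  using coord unfolding Zinv_def coord_system_def by simp

lemma Z_Zinv: "y \<in> img \<Longrightarrow> Z (Zinv y) = y"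
  unfolding Zinv_def img_def by (rule f_inv_into_f)

lemma Z_in_img: "x \<in> S \<Longrightarrow> Z x \<in> img"
  unfolding img_def by simp

lemma img_closure_interior: "img \<subseteq> closure (interior img)"
  using smooth_upto_closure_interior[OF smooth_upto_Zinv] .

lemma Zinv_interior: "y \<in> interior img \<Longrightarrow> Zinv y \<in> interior S"
proof -
  have "continuous_on (interior img) (\<lambda>y. \<chi> l. Zinv y $ l)"
    by (intro continuous_on_vec_lambda smooth_ext_continuous_on[OF smooth_ext_Zinv, of "[]", simplified])
  then have cont: "continuous_on (interior img) Zinv" by simp
  have "inj_on Zinv img" unfolding Zinv_def img_def by (rule inj_on_inv_into) simp
  then have "open (Zinv ` interior img)"
    by (rule invariance_of_domain[OF cont open_interior inj_on_subset[OF _ interior_subset]])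
  moreover have "Zinv ` interior img \<subseteq> S"
    using interior_subset[of img] unfolding Zinv_def img_def by (auto intro: inv_into_into)
  ultimately have "Zinv ` interior img \<subseteq> interior S" by (rule interior_maximal[rotated])
  then show "y \<in> interior img \<Longrightarrow> Zinv y \<in> interior S" by blast
qed

lemma filterlim_Zinv: "x \<in> S \<Longrightarrow> filterlim Zinv (at x within interior S) (at (Z x) within interior img)"
  unfolding filterlim_at
proof (intro conjI)
  assume x: "x \<in> S"
  show "eventually (\<lambda>y. Zinv y \<in> interior S \<and> Zinv y \<noteq> x) (at (Z x) within interior img)"
    unfolding eventually_at_filter
  proof (rule always_eventually, intro allI impI)
    fix y assume "y \<noteq> Z x" "y \<in> interior img"
    moreover have "y \<in> img" using \<open>y \<in> interior img\<close> interior_subset by blast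
    ultimately show "Zinv y \<in> interior S \<and> Zinv y \<noteq> x" using Zinv_interior Z_Zinv by auto
  qed
  have "((\<lambda>y. \<chi> l. Zinv y $ l) \<longlongrightarrow> (\<chi> l. Zinv (Z x) $ l)) (at (Z x) within interior img)"
    by (intro tendsto_vec_lambda smooth_upto_tendsto[OF smooth_upto_Zinv Z_in_img[OF x]])
  then show "(Zinv \<longlongrightarrow> x) (at (Z x) within interior img)" using Zinv_Z[OF x] by simp
qed

lemma jac_interior: "x \<in> interior S \<Longrightarrow> jac x $ l $ k = pd k (\<lambda>x. Z x $ l) x"
  unfolding jac_def using jc_interior[OF reg _ smooth_ext_Z, of x "[k]"] by simp

lemma tendsto_jac: "x \<in> S \<Longrightarrow> ((\<lambda>w. jac w $ l $ k) \<longlongrightarrow> jac x $ l $ k) (at x within interior S)"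
proof -
  assume x: "x \<in> S"
  have "(pd k (\<lambda>x. Z x $ l) \<longlongrightarrow> jac x $ l $ k) (at x within interior S)"
    using jc_tendsto[OF reg x smooth_ext_Z, of "[k]"] unfolding jac_def by simp
  then show ?thesis by (rule Lim_cong_within[THEN iffD1, rotated -1]) (use jac_interior in auto)
qed

lemma jac_mult_pd_Zinv:
  assumes y: "y \<in> interior img"
  shows "(\<Sum>k\<in>UNIV. jac (Zinv y) $ l $ k * pd a (\<lambda>y. Zinv y $ k) y) = (if l = a then 1 else 0)"
proof -
  have py: "Zinv y \<in> interior S" using Zinv_interior[OF y] .
  have "pd a (\<lambda>y. Z (Zinv y) $ l) y = (\<Sum>k\<in>UNIV. pd a (\<lambda>y. Zinv y $ k) y * pd k (\<lambda>x. Z x $ l) (Zinv y))"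
    using smooth_ext_partial_differentiable[OF smooth_ext_Zinv y, of "[]"]
    by (intro pd_compose smooth_ext_has_derivative[OF smooth_ext_Z py]) simp
  moreover have "pd a (\<lambda>y. Z (Zinv y) $ l) y = pd a (\<lambda>y. y $ l) y"
    by (intro pd_cong[OF open_interior y]) (metis Z_Zinv interior_subset subsetD)
  ultimately show ?thesis using jac_interior[OF py] pd_component[of a l y] by (simp add: mult.commute eq_commute)
qed

lemma det_jac_nonzero:
  assumes x: "x \<in> S"
  shows "det (jac x) \<noteq> 0"
proof -
  define D where "D = (\<chi> k a. jc img [a] (\<lambda>y. Zinv y $ k) (Z x))"
  have "(jac x ** D) $ l $ a = mat 1 $ l $ a" for l a
  proof -
    have "((\<lambda>y. jac (Zinv y) $ l $ k) \<longlongrightarrow> jac x $ l $ k) (at (Z x) within interior img)" for k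
      by (rule filterlim_compose[OF tendsto_jac[OF x] filterlim_Zinv[OF x]])
    moreover have "((\<lambda>y. pd a (\<lambda>y. Zinv y $ k) y) \<longlongrightarrow> D $ k $ a) (at (Z x) within interior img)" for k
      using jc_tendsto[OF img_closure_interior Z_in_img[OF x] smooth_ext_Zinv, of "[a]"] by (simp add: D_def)
    ultimately have "((\<lambda>y. \<Sum>k\<in>UNIV. jac (Zinv y) $ l $ k * pd a (\<lambda>y. Zinv y $ k) y)
        \<longlongrightarrow> (\<Sum>k\<in>UNIV. jac x $ l $ k * D $ k $ a)) (at (Z x) within interior img)"
      by (intro tendsto_sum tendsto_mult)
    moreover have "((\<lambda>y. \<Sum>k\<in>UNIV. jac (Zinv y) $ l $ k * pd a (\<lambda>y. Zinv y $ k) y)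
        \<longlongrightarrow> (if l = a then 1 else 0)) (at (Z x) within interior img)"
      by (rule Lim_transform_eventually[OF tendsto_const]) (simp add: eventually_at_filter jac_mult_pd_Zinv)
    moreover have "at (Z x) within interior img \<noteq> bot"
      using img_closure_interior Z_in_img[OF x] by (intro at_within_closure_neq_bot) auto
    ultimately show ?thesis by (simp add: matrix_matrix_mult_def mat_def tendsto_unique)
  qed
  then have "jac x ** D = mat 1" by (simp add: vec_eq_iff)
  then have "det (jac x) * det D = 1" using det_mul[of "jac x" D] by simp
  then show ?thesis by auto
qed

lemma pd_Zinv: "y \<in> interior img \<Longrightarrow> pd a (\<lambda>y. Zinv y $ k) y = jac_inv (Zinv y) $ k $ a"
  using matrix_inv_eqI[of "jac (Zinv y)" "\<chi> k a. pd a (\<lambda>y. Zinv y $ k) y"] jac_mult_pd_Zinv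
  unfolding jac_inv_def by (simp add: vec_eq_iff matrix_matrix_mult_def mat_def)

lemma smooth_ext_jac: "smooth_ext S (\<lambda>x. jac x $ l $ k)"
  by (rule smooth_ext_cong[OF _ smooth_ext_pd[OF smooth_ext_Z]]) (simp add: jac_interior)

lemma nonvanishing_ext_det_jac: "nonvanishing_ext S (\<lambda>x. det (jac x))"
  by (intro nonvanishing_ext_det tendsto_jac det_jac_nonzero)

lemma smooth_ext_jac_inv: "smooth_ext S (\<lambda>x. jac_inv x $ k $ a)"
  unfolding jac_inv_def by (intro smooth_ext_matrix_inv smooth_ext_jac nonvanishing_ext_det_jac)

lemma smooth_ext_chart_ipd: "smooth_ext S u \<Longrightarrow> smooth_ext S (chart_ipd jac_inv is u)"
proof (induction "is")
  case (Cons a "is")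
  then show ?case
    unfolding chart_ipd.simps by (intro smooth_ext_sum smooth_ext_mult smooth_ext_pd smooth_ext_jac_inv) simp_all
qed simp

lemma ipd_compose_Zinv:
  "smooth_ext S u \<Longrightarrow> y \<in> interior img \<Longrightarrow> ipd is (\<lambda>y. u (Zinv y)) y = chart_ipd jac_inv is u (Zinv y)"
proof (induction "is" arbitrary: y)
  case (Cons a "is")
  have "ipd (a # is) (\<lambda>y. u (Zinv y)) y = pd a (ipd is (\<lambda>y. u (Zinv y))) y" by simp
  also have "\<dots> = pd a (\<lambda>y. chart_ipd jac_inv is u (Zinv y)) y"
    by (rule pd_cong[OF open_interior Cons.prems(2)]) (rule Cons.IH[OF Cons.prems(1)])
  also have "\<dots> = (\<Sum>k\<in>UNIV. pd a (\<lambda>y. Zinv y $ k) y * pd k (chart_ipd jac_inv is u) (Zinv y))"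
    using smooth_ext_partial_differentiable[OF smooth_ext_Zinv Cons.prems(2), of "[]"]
      smooth_ext_has_derivative[OF smooth_ext_chart_ipd[OF Cons.prems(1)] Zinv_interior[OF Cons.prems(2)]]
    by (intro pd_compose) simp_all
  finally show ?case using pd_Zinv[OF Cons.prems(2)] by (simp add: mult.commute)
qed simp

lemma jc_compose_Zinv:
  assumes u: "smooth_ext S u" and x: "x \<in> S"
  shows "jc img is (\<lambda>y. u (Zinv y)) (Z x) = jc S [] (chart_ipd jac_inv is u) x"
proof (rule jc_eqI[OF img_closure_interior Z_in_img[OF x]])
  have "((\<lambda>y. chart_ipd jac_inv is u (Zinv y)) \<longlongrightarrow> jc S [] (chart_ipd jac_inv is u) x) (at (Z x) within interior img)"
    using jc_tendsto[OF reg x smooth_ext_chart_ipd[OF u], of "[]"]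
    by (intro filterlim_compose[OF _ filterlim_Zinv[OF x]]) simp
  then show "(ipd is (\<lambda>y. u (Zinv y)) \<longlongrightarrow> jc S [] (chart_ipd jac_inv is u) x) (at (Z x) within interior img)"
    by (rule Lim_cong_within[THEN iffD1, rotated -1]) (use ipd_compose_Zinv[OF u] in auto)
qed

lemma jc_push_metric:
  assumes H: "\<And>i j. smooth_ext S (\<lambda>x. H x $ i $ j)" and x: "x \<in> S"
  shows "jc (Z ` S) is (\<lambda>y. push_metric S Z H y $ a $ b) (Z x) = jc S [] (chart_ipd jac_inv is (pushed_coeff jac_inv H a b)) x"
proof -
  have "push_metric S Z H y $ a $ b = pushed_coeff jac_inv H a b (Zinv y)" if "y \<in> interior img" for y
    using pd_Zinv[OF that] unfolding push_metric_def pushed_coeff_def Zinv_def by simp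
  then have "jc img is (\<lambda>y. push_metric S Z H y $ a $ b) (Z x) = jc img is (\<lambda>y. pushed_coeff jac_inv H a b (Zinv y)) (Z x)"
    by (rule jc_cong)
  also have "\<dots> = jc S [] (chart_ipd jac_inv is (pushed_coeff jac_inv H a b)) x"
    unfolding pushed_coeff_def[abs_def]
    by (intro jc_compose_Zinv[OF _ x] smooth_ext_sum smooth_ext_mult smooth_ext_jac_inv H) simp_all
  finally show ?thesis unfolding img_def .
qed

end

context halfspace_domain
begin

lemma jet_equiv_chart_ipd:
  assumes "\<And>k a. jet_equiv (\<lambda>x. M1 x $ k $ a) (\<lambda>x. M2 x $ k $ a)" and "jet_equiv u1 u2"
  shows "jet_equiv (chart_ipd M1 is u1) (chart_ipd M2 is u2)"
proof (induction "is")
  case (Cons a "is")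
  show ?case unfolding chart_ipd.simps jet_equiv_def
    by (intro allI jet_equiv_upto_sum jet_equiv_upto_mult jet_equiv_upto_if_jet_equiv jet_equiv_pd assms(1)
        Cons.IH) simp_all
qed (use assms(2) in simp)

lemma jc_push_metric_eq:
  assumes "coord_system S Z1" "coord_system S Z2"
    and Z: "\<And>l. jet_equiv (\<lambda>x. Z1 x $ l) (\<lambda>x. Z2 x $ l)"
    and H1: "\<And>i j. smooth_ext S (\<lambda>x. H1 x $ i $ j)" and H2: "\<And>i j. smooth_ext S (\<lambda>x. H2 x $ i $ j)"
    and H: "\<forall>x\<in>bdry. \<forall>is i j. jc S is (\<lambda>y. H1 y $ i $ j) x = jc S is (\<lambda>y. H2 y $ i $ j) x"
    and x: "x \<in> bdry"
  shows "jc (Z1 ` S) is (\<lambda>y. push_metric S Z1 H1 y $ a $ b) (Z1 x)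
       = jc (Z2 ` S) is (\<lambda>y. push_metric S Z2 H2 y $ a $ b) (Z2 x)"
proof -
  interpret c1: coord_chart N S Z1 by unfold_locales (rule assms(1))
  interpret c2: coord_chart N S Z2 by unfold_locales (rule assms(2))
  have "jet_equiv (\<lambda>x. c1.jac x $ l $ k) (\<lambda>x. c2.jac x $ l $ k)" for l k
    by (rule jet_equiv_cong[OF jet_equiv_pd[OF Z, of k]]) (use c1.jac_interior c2.jac_interior in auto)
  then have M: "jet_equiv (\<lambda>x. c1.jac_inv x $ k $ a) (\<lambda>x. c2.jac_inv x $ k $ a)" for k a
    unfolding c1.jac_inv_def c2.jac_inv_def
    by (intro jet_equiv_matrix_inv c1.nonvanishing_ext_det_jac c2.nonvanishing_ext_det_jac)
  have HH: "jet_equiv (\<lambda>x. H1 x $ i $ j) (\<lambda>x. H2 x $ i $ j)" for i j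
    unfolding jet_equiv_def jet_equiv_upto_def jets_agree_def using H1 H2 H by blast
  have "jet_equiv (pushed_coeff c1.jac_inv H1 a b) (pushed_coeff c2.jac_inv H2 a b)"
    unfolding pushed_coeff_def[abs_def] jet_equiv_def
    by (intro allI jet_equiv_upto_sum jet_equiv_upto_mult jet_equiv_upto_if_jet_equiv M HH) simp_all
  then have "jc S [] (chart_ipd c1.jac_inv is (pushed_coeff c1.jac_inv H1 a b)) x
      = jc S [] (chart_ipd c2.jac_inv is (pushed_coeff c2.jac_inv H2 a b)) x"
    using jet_equiv_chart_ipd[OF M] x unfolding jet_equiv_def jet_equiv_upto_def jets_agree_def by force
  then show ?thesis
    using c1.jc_push_metric[OF H1] c2.jc_push_metric[OF H2] x bdry_subset by auto
qed

end

theorem proposition3p5: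
  fixes N :: "'n::finite"
    and \<Omega> :: "(real^'n) set"
    and H1 H2 :: "real^'n \<Rightarrow> real^'n^'n"
    and F1 F2 :: "'n \<Rightarrow> real^'n \<Rightarrow> real"
    and G1 G2 :: "real^'n \<Rightarrow> real"
    and Z1 Z2 :: "real^'n \<Rightarrow> real^'n"
  assumes \<Omega>_open: "openin (top_of_set (halfspace N)) \<Omega>"
    and \<Omega>_meets: "\<Omega> \<inter> {x. x $ N = 0} \<noteq> {}"
    and H1_metric: "riem_metric \<Omega> H1" and H2_metric: "riem_metric \<Omega> H2"
    and H1_form: "normal_form N \<Omega> H1" and H2_form: "normal_form N \<Omega> H2"
    and H_agree: "\<forall>i j. flat_bdry N \<Omega> (\<lambda>x. H1 x $ i $ j - H2 x $ i $ j)"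
    and F1_smooth: "\<forall>l. smooth_upto \<Omega> (F1 l)" and F2_smooth: "\<forall>l. smooth_upto \<Omega> (F2 l)"
    and G1_smooth: "smooth_upto \<Omega> G1" and G2_smooth: "smooth_upto \<Omega> G2"
    and F1_eq: "\<forall>l. \<forall>x\<in>\<Omega>. x $ N > 0 \<longrightarrow> conf_lap H1 (F1 l) x = 0"
    and F2_eq: "\<forall>l. \<forall>x\<in>\<Omega>. x $ N > 0 \<longrightarrow> conf_lap H2 (F2 l) x = 0"
    and G1_eq: "\<forall>x\<in>\<Omega>. x $ N > 0 \<longrightarrow> conf_lap H1 G1 x = 0"
    and G2_eq: "\<forall>x\<in>\<Omega>. x $ N > 0 \<longrightarrow> conf_lap H2 G2 x = 0"
    and F_cauchy: "\<forall>l. \<forall>x\<in>\<Omega>. x $ N = 0 \<longrightarrow>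
                     F1 l x = F2 l x \<and> jc \<Omega> [N] (F1 l) x = jc \<Omega> [N] (F2 l) x"
    and G_cauchy: "\<forall>x\<in>\<Omega>. x $ N = 0 \<longrightarrow> G1 x = G2 x \<and> jc \<Omega> [N] G1 x = jc \<Omega> [N] G2 x"
    and G1_nz: "\<forall>x\<in>\<Omega>. G1 x \<noteq> 0" and G2_nz: "\<forall>x\<in>\<Omega>. G2 x \<noteq> 0"
    and Z1_def: "\<forall>x. Z1 x = (\<chi> l. F1 l x / G1 x)"
    and Z2_def: "\<forall>x. Z2 x = (\<chi> l. F2 l x / G2 x)"
  shows "(\<forall>l. flat_bdry N \<Omega> (\<lambda>x. Z1 x $ l - Z2 x $ l))
       \<and> ((coord_system \<Omega> Z1 \<and> coord_system \<Omega> Z2 \<and>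
           (\<forall>x\<in>\<Omega>. x $ N = 0 \<longrightarrow> (\<forall>is i j.
               jc \<Omega> is (\<lambda>y. H1 y $ i $ j) x = jc \<Omega> is (\<lambda>y. H2 y $ i $ j) x)))
          \<longrightarrow> (\<forall>x\<in>\<Omega>. x $ N = 0 \<longrightarrow> Z1 x = Z2 x \<and>
                (\<forall>is a b. jc (Z1 ` \<Omega>) is (\<lambda>y. push_metric \<Omega> Z1 H1 y $ a $ b) (Z1 x)
                        = jc (Z2 ` \<Omega>) is (\<lambda>y. push_metric \<Omega> Z2 H2 y $ a $ b) (Z2 x))))"
proof -
  interpret halfspace_domain N \<Omega>
    by (intro halfspace_domain.intro \<Omega>_open smooth_upto_closure_interior[OF G1_smooth])
  have H: "jet_equiv (\<lambda>y. H1 y $ a $ b) (\<lambda>y. H2 y $ a $ b)" for a b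
    by (rule jet_equiv_metric[OF H1_metric H2_metric H_agree])
  note cauchy = conf_lap_cauchy_jet_equiv[OF H1_metric H2_metric H H1_form H2_form]
  have "jet_equiv (\<lambda>x. F1 l x / G1 x) (\<lambda>x. F2 l x / G2 x)" for l
    using F1_smooth F2_smooth F1_eq F2_eq F_cauchy G1_nz G2_nz
    by (intro jet_equiv_divide cauchy G1_smooth G2_smooth G1_eq G2_eq G_cauchy nonvanishing_ext_smooth_upto) auto
  moreover have "(\<lambda>x. Z1 x $ l) = (\<lambda>x. F1 l x / G1 x)" "(\<lambda>x. Z2 x $ l) = (\<lambda>x. F2 l x / G2 x)" for l
    using Z1_def Z2_def by auto
  ultimately have Z: "jet_equiv (\<lambda>x. Z1 x $ l) (\<lambda>x. Z2 x $ l)" for l by simp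
  show ?thesis
    using flat_bdry_if_jet_equiv[OF Z] Z1_def Z2_def F_cauchy G_cauchy
      jc_push_metric_eq[OF _ _ Z riem_metric_smooth_ext[OF H1_metric] riem_metric_smooth_ext[OF H2_metric]]
    by (auto simp: vec_eq_iff bdry_def)
qed

end
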